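(* For every $X\subseteq\mathbb N$ and $\alpha\in(71/72,1]$, the algebra $\mathcal D_{\mathcal K}(X,\alpha)$ is an almost masa of $\mathcal A_0(X)$.
   Context: Fix an orthonormal basis $(e_k)$ of $\ell_2$; $H_n=\mathrm{span}\{e_{2n},e_{2n+1}\}$. $\mathcal A_0$ is the set of $T\in\mathcal B(\ell_2)$ with $\langle Te_k,e_m\rangle\ne0\Rightarrow\{k,m\}\subseteq\{2n,2n+1\}$ for some $n$, written $T=(T_n)$, $T_n\in\mathcal B(H_n)$ the restriction; $\mathcal A_0(X)=\{T\in\mathcal A_0:T_n=0\ \forall n\notin X\}$. For $\alpha\in(71/72,1]$, $f_{\alpha,2n}=\alpha e_{2n}+\sqrt{1-\alpha^2}e_{2n+1}$, $f_{\alpha,2n+1}=\sqrt{1-\alpha^2}e_{2n}-\alpha e_{2n+1}$; $\mathcal D(X,\alpha)$ is the set of $T\in\mathcal A_0(X)$ with $T_n$ diagonal in $\{f_{\alpha,2n},f_{\alpha,2n+1}\}$ for all $n\in X$; $\mathcal D_{\mathcal K}(X,\alpha)=\{S+R:S\in\mathcal D(X,\alpha),R\in\mathcal K(\ell_2)\cap\mathcal A_0(X)\}$. $S,T$ almost commute if $ST-TS$ is compact; an almost masa of a C*-algebra $\mathcal C\subseteq\mathcal B(\ell_2)$ is a C*-subalgebra of $\mathcal C$ maximal under inclusion among C*-subalgebras of $\mathcal C$ whose elements pairwise almost commute. *)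

theory Defs
  imports Complex_Main
begin

definition l2 :: "(nat \<Rightarrow> complex) set" where
  "l2 = {x. summable (\<lambda>k. (cmod (x k))^2)}"

definition l2norm :: "(nat \<Rightarrow> complex) \<Rightarrow> real" where
  "l2norm x = sqrt (\<Sum>k. (cmod (x k))^2)"

definition l2inner :: "(nat \<Rightarrow> complex) \<Rightarrow> (nat \<Rightarrow> complex) \<Rightarrow> complex" where
  "l2inner x y = (\<Sum>k. x k * cnj (y k))"

definition ebasis :: "nat \<Rightarrow> nat \<Rightarrow> complex" where
  "ebasis k = (\<lambda>m. if m = k then 1 else 0)"

text \<open>Bounded linear operators on l2; canonically extended by 0 outside l2.\<close>
definition bop :: "((nat \<Rightarrow> complex) \<Rightarrow> (nat \<Rightarrow> complex)) \<Rightarrow> bool" where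
  "bop T \<longleftrightarrow>
     (\<forall>x\<in>l2. T x \<in> l2) \<and>
     (\<forall>x\<in>l2. \<forall>y\<in>l2. \<forall>a b. T (\<lambda>k. a * x k + b * y k) = (\<lambda>k. a * T x k + b * T y k)) \<and>
     (\<exists>C. \<forall>x\<in>l2. l2norm (T x) \<le> C * l2norm x) \<and>
     (\<forall>x. x \<notin> l2 \<longrightarrow> T x = (\<lambda>k. 0))"

definition opnorm :: "((nat \<Rightarrow> complex) \<Rightarrow> (nat \<Rightarrow> complex)) \<Rightarrow> real" where
  "opnorm T = Sup {l2norm (T x) | x. x \<in> l2 \<and> l2norm x \<le> 1}"

definition op_add :: "((nat \<Rightarrow> complex) \<Rightarrow> (nat \<Rightarrow> complex)) \<Rightarrow> ((nat \<Rightarrow> complex) \<Rightarrow> (nat \<Rightarrow> complex)) \<Rightarrow> ((nat \<Rightarrow> complex) \<Rightarrow> (nat \<Rightarrow> complex))" where "op_add S T = (\<lambda>x k. S x k + T x k)"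
definition op_diff :: "((nat \<Rightarrow> complex) \<Rightarrow> (nat \<Rightarrow> complex)) \<Rightarrow> ((nat \<Rightarrow> complex) \<Rightarrow> (nat \<Rightarrow> complex)) \<Rightarrow> ((nat \<Rightarrow> complex) \<Rightarrow> (nat \<Rightarrow> complex))" where "op_diff S T = (\<lambda>x k. S x k - T x k)"
definition op_smult :: "complex \<Rightarrow> ((nat \<Rightarrow> complex) \<Rightarrow> (nat \<Rightarrow> complex)) \<Rightarrow> ((nat \<Rightarrow> complex) \<Rightarrow> (nat \<Rightarrow> complex))" where "op_smult c T = (\<lambda>x k. c * T x k)"

definition compact_op :: "((nat \<Rightarrow> complex) \<Rightarrow> (nat \<Rightarrow> complex)) \<Rightarrow> bool" where
  "compact_op T \<longleftrightarrow> bop T \<and>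
     (\<forall>xs :: nat \<Rightarrow> nat \<Rightarrow> complex. (\<forall>n. xs n \<in> l2) \<and> (\<exists>B. \<forall>n. l2norm (xs n) \<le> B) \<longrightarrow>
        (\<exists>(r :: nat \<Rightarrow> nat) y. strict_mono r \<and> y \<in> l2 \<and>
           (\<lambda>n. l2norm (\<lambda>k. T (xs (r n)) k - y k)) \<longlonglongrightarrow> 0))"

definition is_adjoint :: "((nat \<Rightarrow> complex) \<Rightarrow> (nat \<Rightarrow> complex)) \<Rightarrow> ((nat \<Rightarrow> complex) \<Rightarrow> (nat \<Rightarrow> complex)) \<Rightarrow> bool" where
  "is_adjoint T S \<longleftrightarrow> bop S \<and> (\<forall>x\<in>l2. \<forall>y\<in>l2. l2inner (T x) y = l2inner x (S y))"

definition cstar_subalg :: "((nat \<Rightarrow> complex) \<Rightarrow> (nat \<Rightarrow> complex)) set \<Rightarrow> bool" where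
  "cstar_subalg A \<longleftrightarrow>
     A \<subseteq> Collect bop \<and> (\<lambda>x k. 0) \<in> A \<and>
     (\<forall>S\<in>A. \<forall>T\<in>A. op_add S T \<in> A) \<and>
     (\<forall>c. \<forall>T\<in>A. op_smult c T \<in> A) \<and>
     (\<forall>S\<in>A. \<forall>T\<in>A. S \<circ> T \<in> A) \<and>
     (\<forall>T\<in>A. \<exists>S\<in>A. is_adjoint T S) \<and>
     (\<forall>Ts T. (\<forall>n. Ts n \<in> A) \<and> bop T \<and> (\<lambda>n. opnorm (op_diff (Ts n) T)) \<longlonglongrightarrow> 0 \<longrightarrow> T \<in> A)"

definition almost_commute :: "((nat \<Rightarrow> complex) \<Rightarrow> (nat \<Rightarrow> complex)) \<Rightarrow> ((nat \<Rightarrow> complex) \<Rightarrow> (nat \<Rightarrow> complex)) \<Rightarrow> bool" where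
  "almost_commute S T \<longleftrightarrow> compact_op (op_diff (S \<circ> T) (T \<circ> S))"

definition almost_commutative :: "((nat \<Rightarrow> complex) \<Rightarrow> (nat \<Rightarrow> complex)) set \<Rightarrow> bool" where
  "almost_commutative A \<longleftrightarrow> (\<forall>S\<in>A. \<forall>T\<in>A. almost_commute S T)"

definition almost_masa :: "((nat \<Rightarrow> complex) \<Rightarrow> (nat \<Rightarrow> complex)) set \<Rightarrow> ((nat \<Rightarrow> complex) \<Rightarrow> (nat \<Rightarrow> complex)) set \<Rightarrow> bool" where
  "almost_masa C A \<longleftrightarrow> cstar_subalg A \<and> A \<subseteq> C \<and> almost_commutative A \<and>
     (\<forall>B. cstar_subalg B \<and> almost_commutative B \<and> A \<subseteq> B \<and> B \<subseteq> C \<longrightarrow> B = A)"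

text \<open>A_0(X): block diagonal w.r.t. H_n = span{e_2n, e_2n+1}, with T_n = 0 for n not in X.\<close>
definition A0 :: "nat set \<Rightarrow> ((nat \<Rightarrow> complex) \<Rightarrow> (nat \<Rightarrow> complex)) set" where
  "A0 X = {T. bop T \<and> (\<forall>k m. T (ebasis k) m \<noteq> 0 \<longrightarrow>
                 (\<exists>n\<in>X. k \<in> {2*n, 2*n+1} \<and> m \<in> {2*n, 2*n+1}))}"

definition fvec :: "real \<Rightarrow> nat \<Rightarrow> nat \<Rightarrow> complex" where
  "fvec \<alpha> j = (let n = j div 2 in
     if even j then (\<lambda>m. complex_of_real \<alpha> * ebasis (2*n) m + complex_of_real (sqrt (1 - \<alpha>^2)) * ebasis (2*n+1) m)
     else (\<lambda>m. complex_of_real (sqrt (1 - \<alpha>^2)) * ebasis (2*n) m - complex_of_real \<alpha> * ebasis (2*n+1) m))"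

definition Dset :: "nat set \<Rightarrow> real \<Rightarrow> ((nat \<Rightarrow> complex) \<Rightarrow> (nat \<Rightarrow> complex)) set" where
  "Dset X \<alpha> = {T \<in> A0 X. \<forall>n\<in>X.
      (\<exists>c. T (fvec \<alpha> (2*n)) = (\<lambda>m. c * fvec \<alpha> (2*n) m)) \<and>
      (\<exists>c. T (fvec \<alpha> (2*n+1)) = (\<lambda>m. c * fvec \<alpha> (2*n+1) m))}"

definition DK :: "nat set \<Rightarrow> real \<Rightarrow> ((nat \<Rightarrow> complex) \<Rightarrow> (nat \<Rightarrow> complex)) set" where
  "DK X \<alpha> = {op_add S R | S R. S \<in> Dset X \<alpha> \<and> R \<in> A0 X \<and> compact_op R}"

end

(* Every T in A_0(X) is the block-diagonal operator of its matrix, so everything reduces to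
   sequences of 2x2 blocks T_n.  A block-diagonal operator is compact iff its blocks tend to 0.
   Write each block in the basis f_2n, f_2n+1 (a real orthogonal change of basis that is its own
   inverse): T is diagonal in it up to a compact perturbation, i.e. T lies in D_K(X, alpha), iff the
   two off-diagonal f-entries of T_n tend to 0.  This condition is stable under sums, products,
   adjoints and norm limits, and the 2x2 product formula shows that commutators of such operators
   have all f-entries tending to 0.  For maximality, the projection P onto span {f_2n | n in X}
   lies in D_K(X, alpha), and the off-diagonal f-entries of TP - PT are those of T up to sign,
   so every T in A_0(X) that almost commutes with P is in D_K(X, alpha). *)

theory Submission
  imports Defs "HOL-Analysis.Analysis" "HOL-Library.Diagonal_Subsequence"
begin

type_synonym vec = "nat \<Rightarrow> complex"
type_synonym opr = "vec \<Rightarrow> vec"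
type_synonym mat = "nat \<Rightarrow> nat \<Rightarrow> complex"

section \<open>The space l2\<close>

lemma power2_norm_add_le:
  fixes u v :: "'a::real_normed_vector"
  shows "(norm (u + v))^2 \<le> 2 * (norm u)^2 + 2 * (norm v)^2"
proof -
  have "(norm (u + v))^2 \<le> (norm u + norm v)^2"
    by (simp add: power_mono norm_triangle_ineq)
  also have "\<dots> \<le> 2 * (norm u)^2 + 2 * (norm v)^2"
    by (smt (verit) sum_squares_bound zero_le_power2 power2_sum)
  finally show ?thesis .
qed

lemma l2_lincomb:
  assumes "x \<in> l2" "y \<in> l2"
  shows "(\<lambda>k. a * x k + b * y k) \<in> l2"
proof -
  define g where "g k = 2 * (cmod a)^2 * (cmod (x k))^2 + 2 * (cmod b)^2 * (cmod (y k))^2" for k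
  have "summable g"
    using assms unfolding g_def l2_def by (intro summable_add summable_mult) auto
  moreover have "norm ((cmod (a * x k + b * y k))^2) \<le> g k" for k
    using power2_norm_add_le[of "a * x k" "b * y k"] by (simp add: g_def norm_mult power_mult_distrib)
  ultimately show ?thesis
    unfolding l2_def by (auto intro!: summable_comparison_test'[where g=g and N=0])
qed

lemma l2_diff: "x \<in> l2 \<Longrightarrow> y \<in> l2 \<Longrightarrow> (\<lambda>k. x k - y k) \<in> l2"
  using l2_lincomb[of x y 1 "-1"] by simp

lemma l2_finite_support:
  assumes "\<And>k. k \<ge> N \<Longrightarrow> x k = 0" shows "x \<in> l2"
  unfolding l2_def mem_Collect_eq
  by (rule summable_finite[of "{..<N}"]) (use assms in \<open>simp_all add: not_less\<close>)

lemma ebasis_l2 [simp]: "ebasis k \<in> l2"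
  by (rule l2_finite_support[of "Suc k"]) (auto simp: ebasis_def)

lemma l2norm_nonneg: "x \<in> l2 \<Longrightarrow> l2norm x \<ge> 0"
  unfolding l2norm_def l2_def by (auto intro!: real_sqrt_ge_zero suminf_nonneg)

lemma l2norm_power2: "x \<in> l2 \<Longrightarrow> (l2norm x)^2 = (\<Sum>k. (cmod (x k))^2)"
  unfolding l2norm_def l2_def by (auto intro!: real_sqrt_pow2 suminf_nonneg)

lemma l2norm_le_iff_power2:
  assumes "x \<in> l2" "c \<ge> 0" shows "l2norm x \<le> c \<longleftrightarrow> (\<Sum>k. (cmod (x k))^2) \<le> c^2"
  using assms by (metis l2norm_nonneg l2norm_power2 power2_le_imp_le power_mono)

lemma l2norm_ebasis [simp]: "l2norm (ebasis k) = 1"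
proof -
  have "(\<lambda>m. (cmod (ebasis k m))^2) = (\<lambda>m. if m = k then 1 else 0)"
    by (auto simp: ebasis_def)
  moreover have "(\<lambda>m. if m = k then (1::real) else 0) sums 1"
    using sums_single[of k "\<lambda>_. (1::real)"] by simp
  ultimately show ?thesis unfolding l2norm_def by (simp add: sums_iff)
qed

lemma norm_coord_le_l2norm:
  assumes "x \<in> l2" shows "cmod (x m) \<le> l2norm x"
proof -
  have "summable (\<lambda>k. (cmod (x k))^2)" using assms by (simp add: l2_def)
  from sum_le_suminf[OF this, of "{m}"] have "(cmod (x m))^2 \<le> (\<Sum>k. (cmod (x k))^2)"
    by simp
  then show ?thesis unfolding l2norm_def by (metis real_sqrt_le_mono real_sqrt_abs abs_norm_cancel)
qed

lemma l2norm_diff_le: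
  assumes "x \<in> l2" "y \<in> l2"
  shows "l2norm (\<lambda>k. x k - y k) \<le> 2 * (l2norm x + l2norm y)"
proof -
  have sx: "summable (\<lambda>k. (cmod (x k))^2)" and sy: "summable (\<lambda>k. (cmod (y k))^2)"
    using assms by (auto simp: l2_def)
  have sd: "summable (\<lambda>k. (cmod (x k - y k))^2)" using l2_diff[OF assms] by (simp add: l2_def)
  have "(\<Sum>k. (cmod (x k - y k))^2) \<le> (\<Sum>k. 2 * (cmod (x k))^2 + 2 * (cmod (y k))^2)"
    using sd sx sy power2_norm_add_le[of "x k" "- y k" for k]
    by (intro suminf_le) (auto intro!: summable_add summable_mult)
  also have "\<dots> = 2 * (l2norm x)^2 + 2 * (l2norm y)^2"
    using sx sy assms by (simp add: l2norm_power2 suminf_add[symmetric] suminf_mult)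
  also have "\<dots> \<le> (2 * (l2norm x + l2norm y))^2"
    using l2norm_nonneg[OF assms(1)] l2norm_nonneg[OF assms(2)] by (simp add: power2_eq_square algebra_simps)
  finally show ?thesis
    using l2_diff[OF assms] l2norm_nonneg[OF assms(1)] l2norm_nonneg[OF assms(2)]
    by (simp add: l2norm_le_iff_power2)
qed

definition l2tail :: "nat \<Rightarrow> vec \<Rightarrow> vec" where
  "l2tail N x = (\<lambda>k. if k < N then 0 else x k)"

lemma l2tail_l2: "x \<in> l2 \<Longrightarrow> l2tail N x \<in> l2"
  unfolding l2_def mem_Collect_eq
  by (rule summable_comparison_test'[where N=0]) (auto simp: l2tail_def)

(* Stated as a linear combination so that the linearity clause of bop applies. *)
lemma l2tail_Suc: "l2tail N x = (\<lambda>k. x N * ebasis N k + 1 * l2tail (Suc N) x k)"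
  by (auto simp: l2tail_def ebasis_def fun_eq_iff less_Suc_eq)

lemma l2norm_l2tail_tendsto_zero:
  assumes "x \<in> l2" shows "(\<lambda>N. l2norm (l2tail N x)) \<longlonglongrightarrow> 0"
proof -
  define f where "f = (\<lambda>k. (cmod (x k))^2)"
  have s: "summable f" using assms by (simp add: l2_def f_def)
  have eq: "(\<Sum>k. (cmod (l2tail N x k))^2) = suminf f - (\<Sum>k<N. f k)" for N
  proof -
    have "(\<lambda>k. f k - (if k < N then f k else 0)) sums (suminf f - (\<Sum>k<N. f k))"
      using sums_diff[OF summable_sums[OF s] sums_If_finite_set[of "{..<N}" f]] by simp
    moreover have "(\<lambda>k. f k - (if k < N then f k else 0)) = (\<lambda>k. (cmod (l2tail N x k))^2)"
      by (auto simp: l2tail_def f_def)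
    ultimately show ?thesis by (simp add: sums_iff)
  qed
  have "(\<lambda>N. sqrt (suminf f - (\<Sum>k<N. f k))) \<longlonglongrightarrow> sqrt (suminf f - suminf f)"
    by (intro tendsto_real_sqrt tendsto_diff tendsto_const summable_LIMSEQ s)
  then show ?thesis unfolding l2norm_def eq by simp
qed

section \<open>Bounded operators and their matrix entries\<close>

lemma bopD:
  assumes "bop T"
  shows "\<And>x. x \<in> l2 \<Longrightarrow> T x \<in> l2"
    and "\<And>x y a b. x \<in> l2 \<Longrightarrow> y \<in> l2 \<Longrightarrow> T (\<lambda>k. a * x k + b * y k) = (\<lambda>k. a * T x k + b * T y k)"
    and "\<And>x. x \<notin> l2 \<Longrightarrow> T x = (\<lambda>k. 0)"
  using assms unfolding bop_def by blast+

lemma bop_bound: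
  assumes "bop T"
  obtains C where "C \<ge> 0" "\<And>x. x \<in> l2 \<Longrightarrow> l2norm (T x) \<le> C * l2norm x"
proof -
  obtain C where C: "\<And>x. x \<in> l2 \<Longrightarrow> l2norm (T x) \<le> C * l2norm x"
    using assms unfolding bop_def by blast
  have "0 \<le> l2norm (T (ebasis 0))" using bopD(1)[OF assms] by (simp add: l2norm_nonneg)
  also have "\<dots> \<le> C" using C[of "ebasis 0"] by simp
  finally show ?thesis using that C by blast
qed

lemma bop_diff:
  assumes A: "bop A" and B: "bop B" shows "bop (op_diff A B)"
  unfolding bop_def
proof (intro conjI ballI allI impI)
  fix x assume x: "x \<in> l2"
  show "op_diff A B x \<in> l2"
    unfolding op_diff_def using bopD(1)[OF A x] bopD(1)[OF B x] by (rule l2_diff)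
next
  fix x y a b assume x: "x \<in> l2" and y: "y \<in> l2"
  show "op_diff A B (\<lambda>k. a * x k + b * y k) = (\<lambda>k. a * op_diff A B x k + b * op_diff A B y k)"
    unfolding op_diff_def bopD(2)[OF A x y] bopD(2)[OF B x y] by (simp add: algebra_simps)
next
  obtain CA where CA: "\<And>x. x \<in> l2 \<Longrightarrow> l2norm (A x) \<le> CA * l2norm x" using bop_bound[OF A] by blast
  obtain CB where CB: "\<And>x. x \<in> l2 \<Longrightarrow> l2norm (B x) \<le> CB * l2norm x" using bop_bound[OF B] by blast
  have "l2norm (op_diff A B x) \<le> (2 * (CA + CB)) * l2norm x" if x: "x \<in> l2" for x
  proof -
    have "l2norm (op_diff A B x) \<le> 2 * (l2norm (A x) + l2norm (B x))"
      unfolding op_diff_def by (rule l2norm_diff_le[OF bopD(1)[OF A x] bopD(1)[OF B x]])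
    also have "\<dots> \<le> 2 * (CA * l2norm x + CB * l2norm x)" using CA[OF x] CB[OF x] by simp
    finally show ?thesis by (simp add: algebra_simps)
  qed
  then show "\<exists>C. \<forall>x\<in>l2. l2norm (op_diff A B x) \<le> C * l2norm x" by blast
next
  fix x assume "x \<notin> l2"
  then show "op_diff A B x = (\<lambda>k. 0)" unfolding op_diff_def using bopD(3)[OF A] bopD(3)[OF B] by simp
qed

definition entry :: "opr \<Rightarrow> mat" where
  "entry T m k = T (ebasis k) m"

lemma norm_entry_le:
  assumes "bop T" "\<And>x. x \<in> l2 \<Longrightarrow> l2norm (T x) \<le> C * l2norm x"
  shows "cmod (entry T m k) \<le> C"
  unfolding entry_def
  by (rule order.trans[OF norm_coord_le_l2norm]) (use assms(2)[of "ebasis k"] assms(1) bopD(1) in auto)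

lemma norm_entry_le_opnorm:
  assumes "bop T" shows "cmod (entry T m k) \<le> opnorm T"
proof -
  obtain C where C: "C \<ge> 0" "\<And>x. x \<in> l2 \<Longrightarrow> l2norm (T x) \<le> C * l2norm x"
    using bop_bound[OF assms] by blast
  have "bdd_above {l2norm (T x) | x. x \<in> l2 \<and> l2norm x \<le> 1}"
  proof (rule bdd_aboveI)
    fix r assume "r \<in> {l2norm (T x) | x. x \<in> l2 \<and> l2norm x \<le> 1}"
    then obtain x where x: "x \<in> l2" "l2norm x \<le> 1" "r = l2norm (T x)" by blast
    have "C * l2norm x \<le> C" using x(2) C(1) by (simp add: mult_left_le)
    then show "r \<le> C" using C(2)[OF x(1)] x(3) by simp
  qed
  then have "l2norm (T (ebasis k)) \<le> opnorm T"
    unfolding opnorm_def by (intro cSup_upper) auto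
  then show ?thesis
    unfolding entry_def by (rule order.trans[OF norm_coord_le_l2norm, rotated]) (use assms bopD(1) in auto)
qed

lemma norm_entry_diff_le_opnorm:
  assumes "bop S" "bop T" shows "cmod (entry S m k - entry T m k) \<le> opnorm (op_diff S T)"
  using norm_entry_le_opnorm[OF bop_diff[OF assms], of m k] by (simp add: entry_def op_diff_def)

lemma bop_expansion:
  assumes "bop T" "x \<in> l2"
  shows "T x m = (\<Sum>k<N. x k * entry T m k) + T (l2tail N x) m"
proof (induction N)
  case 0 then show ?case by (simp add: l2tail_def)
next
  case (Suc N)
  have "T (l2tail N x) = T (\<lambda>k. x N * ebasis N k + 1 * l2tail (Suc N) x k)"
    by (subst l2tail_Suc) simp
  also have "\<dots> = (\<lambda>k. x N * T (ebasis N) k + 1 * T (l2tail (Suc N) x) k)"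
    by (rule bopD(2)[OF assms(1)]) (auto intro: l2tail_l2 assms)
  finally show ?case using Suc by (simp add: entry_def)
qed

section \<open>Block-diagonal operators\<close>

definition block_base :: "nat \<Rightarrow> nat" where
  "block_base m = 2 * (m div 2)"

lemma block_base_simps [simp]:
  "block_base (2*n) = 2*n" "block_base (Suc (2*n)) = 2*n"
  "block_base (n*2) = n*2" "block_base (Suc (n*2)) = n*2"
  "block_base (block_base m) = block_base m" "block_base (Suc (block_base m)) = block_base m"
  unfolding block_base_def by simp_all

lemma same_block_iff: "k div 2 = m div 2 \<longleftrightarrow> k = block_base m \<or> k = Suc (block_base m)"
  unfolding block_base_def by auto

lemma block_base_div [simp]: "block_base m div 2 = m div 2" "Suc (block_base m) div 2 = m div 2"
  unfolding block_base_def by simp_all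

lemma same_block_cases:
  assumes "k div 2 = m div 2"
  shows "(m = 2*(m div 2) \<or> m = Suc (2*(m div 2))) \<and> (k = 2*(m div 2) \<or> k = Suc (2*(m div 2)))"
  using same_block_iff[of m m] same_block_iff[of k m] assms unfolding block_base_def by auto

(* The partial sums of the expansion of x in the e_k are constant once N passes the block of m,
   and the remainder T (l2tail N x) m tends to 0. *)
lemma bop_block_diagonal_apply:
  assumes "bop T" "\<And>k m. entry T m k \<noteq> 0 \<Longrightarrow> m div 2 = k div 2" "x \<in> l2"
  shows "T x m = entry T m (block_base m) * x (block_base m)
                 + entry T m (Suc (block_base m)) * x (Suc (block_base m))"
    (is "_ = ?b")
proof -
  obtain C where C: "\<And>x. x \<in> l2 \<Longrightarrow> l2norm (T x) \<le> C * l2norm x"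
    using bop_bound[OF assms(1)] by blast
  have partial_sum: "(\<Sum>k<N. x k * entry T m k) = ?b" if "N \<ge> Suc (Suc (block_base m))" for N
  proof -
    have "x i * entry T m i = 0" if "i \<notin> {block_base m, Suc (block_base m)}" for i
      using assms(2)[where m=m and k=i] same_block_iff[of i m] that by auto
    then have "(\<Sum>k<N. x k * entry T m k) = (\<Sum>k\<in>{block_base m, Suc (block_base m)}. x k * entry T m k)"
      using that by (intro sum.mono_neutral_right) auto
    then show ?thesis by (simp add: mult.commute)
  qed
  have "cmod (T x m - ?b) \<le> C * l2norm (l2tail N x)" if "N \<ge> Suc (Suc (block_base m))" for N
  proof -
    have "T x m - ?b = T (l2tail N x) m"
      using bop_expansion[OF assms(1,3), of m N] partial_sum[OF that] by simp
    also have "cmod \<dots> \<le> l2norm (T (l2tail N x))"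
      by (rule norm_coord_le_l2norm) (auto intro: bopD(1)[OF assms(1)] l2tail_l2 assms)
    also have "\<dots> \<le> C * l2norm (l2tail N x)" by (rule C) (auto intro: l2tail_l2 assms)
    finally show ?thesis .
  qed
  moreover have "(\<lambda>N. C * l2norm (l2tail N x)) \<longlonglongrightarrow> C * 0"
    by (intro tendsto_mult tendsto_const l2norm_l2tail_tendsto_zero assms)
  ultimately have "cmod (T x m - ?b) \<le> C * 0"
    by (intro LIMSEQ_le_const) auto
  then show ?thesis by simp
qed

(* Only the diagonal 2x2 blocks of t are read; off l2 the value is 0, following bop. *)
definition block_op :: "mat \<Rightarrow> opr" where
  "block_op t x = (if x \<in> l2
     then (\<lambda>m. t m (block_base m) * x (block_base m) + t m (Suc (block_base m)) * x (Suc (block_base m)))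
     else (\<lambda>m. 0))"

definition bounded_entries :: "mat \<Rightarrow> real \<Rightarrow> bool" where
  "bounded_entries t K \<longleftrightarrow> K \<ge> 0 \<and> (\<forall>m k. cmod (t m k) \<le> K)"

definition block_supp :: "nat set \<Rightarrow> mat \<Rightarrow> bool" where
  "block_supp X t \<longleftrightarrow> (\<forall>m k. t m k \<noteq> 0 \<longrightarrow> m div 2 = k div 2 \<and> m div 2 \<in> X)"

lemma block_supp_iff: "block_supp X t \<longleftrightarrow> (\<forall>m k. \<not> (m div 2 = k div 2 \<and> m div 2 \<in> X) \<longrightarrow> t m k = 0)"
  unfolding block_supp_def by blast

lemma A0_entries:
  assumes "T \<in> A0 X"
  shows "block_supp X (entry T)" "\<exists>K. bounded_entries (entry T) K"
proof -
  show "block_supp X (entry T)" unfolding block_supp_def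
  proof (intro allI impI)
    fix m k assume "entry T m k \<noteq> 0"
    then obtain n where "n \<in> X" "k \<in> {2*n, 2*n+1}" "m \<in> {2*n, 2*n+1}"
      using assms unfolding A0_def entry_def by blast
    then show "m div 2 = k div 2 \<and> m div 2 \<in> X" by auto
  qed
  have "bop T" using assms by (simp add: A0_def)
  then obtain C where "C \<ge> 0" "\<And>x. x \<in> l2 \<Longrightarrow> l2norm (T x) \<le> C * l2norm x"
    using bop_bound by blast
  then show "\<exists>K. bounded_entries (entry T) K"
    unfolding bounded_entries_def using norm_entry_le[OF \<open>bop T\<close>] by blast
qed

lemma A0_eq_block_op:
  assumes "T \<in> A0 X" shows "T = block_op (entry T)"
proof
  fix x
  have T: "bop T" using assms by (simp add: A0_def)
  have "m div 2 = k div 2" if "entry T m k \<noteq> 0" for k m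
    using A0_entries(1)[OF assms] that unfolding block_supp_def by blast
  then show "T x = block_op (entry T) x"
    using bop_block_diagonal_apply[OF T] bopD(3)[OF T] by (auto simp: block_op_def)
qed

lemma A0_closed:
  assumes Ts: "\<And>n. Ts n \<in> A0 X" and T: "bop T" and lim: "(\<lambda>n. opnorm (op_diff (Ts n) T)) \<longlonglongrightarrow> 0"
  shows "T \<in> A0 X"
  unfolding A0_def
proof (intro CollectI conjI T allI impI)
  fix k m assume "T (ebasis k) m \<noteq> 0"
  then have "cmod (entry T m k) > 0" by (simp add: entry_def)
  then obtain n where "norm (opnorm (op_diff (Ts n) T) - 0) < cmod (entry T m k)"
    using LIMSEQ_D[OF lim] by blast
  moreover have "cmod (entry (Ts n) m k - entry T m k) \<le> opnorm (op_diff (Ts n) T)"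
    using norm_entry_diff_le_opnorm Ts T by (auto simp: A0_def)
  ultimately have "Ts n (ebasis k) m \<noteq> 0" by (auto simp: entry_def)
  then show "\<exists>n\<in>X. k \<in> {2 * n, 2 * n + 1} \<and> m \<in> {2 * n, 2 * n + 1}"
    using Ts[of n] unfolding A0_def by blast
qed

definition block_mass :: "vec \<Rightarrow> nat \<Rightarrow> real" where
  "block_mass x m = (cmod (x (block_base m)))^2 + (cmod (x (Suc (block_base m))))^2"

lemma block_mass_nonneg: "block_mass x m \<ge> 0"
  by (simp add: block_mass_def)

lemma sum_block_mass: "(\<Sum>m<2*N. block_mass x m) = 2 * (\<Sum>k<2*N. (cmod (x k))^2)"
  by (induction N) (simp_all add: block_mass_def)

lemma sum_block_mass_le:
  assumes "x \<in> l2" "finite A" shows "(\<Sum>m\<in>A. block_mass x m) \<le> 2 * (l2norm x)^2"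
proof -
  have s: "summable (\<lambda>k. (cmod (x k))^2)" using assms by (simp add: l2_def)
  obtain n where n: "A \<subseteq> {..<n}" using assms(2) finite_nat_iff_bounded by blast
  have "(\<Sum>m\<in>A. block_mass x m) \<le> (\<Sum>m<2*n. block_mass x m)"
    using n by (intro sum_mono2) (auto simp: block_mass_nonneg)
  also have "\<dots> = 2 * (\<Sum>k<2*n. (cmod (x k))^2)" by (rule sum_block_mass)
  also have "\<dots> \<le> 2 * (\<Sum>k. (cmod (x k))^2)"
    using sum_le_suminf[OF s, of "{..<2*n}"] by simp
  finally show ?thesis using l2norm_power2[OF assms(1)] by simp
qed

lemma norm_block_row_le:
  assumes "cmod (t m (block_base m)) \<le> K" "cmod (t m (Suc (block_base m))) \<le> K" "K \<ge> 0"
  shows "(cmod (t m (block_base m) * x (block_base m) + t m (Suc (block_base m)) * x (Suc (block_base m))))^2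
           \<le> 2 * K^2 * block_mass x m"
proof -
  have term_le: "(cmod (t m j * x j))^2 \<le> K^2 * (cmod (x j))^2" if "cmod (t m j) \<le> K" for j
    using that by (simp add: norm_mult power_mult_distrib mult_right_mono power_mono)
  show ?thesis
    using power2_norm_add_le[of "t m (block_base m) * x (block_base m)" "t m (Suc (block_base m)) * x (Suc (block_base m))"]
      term_le[OF assms(1)] term_le[OF assms(2)]
    unfolding block_mass_def by (simp add: distrib_left)
qed

lemma summable_block_mass: "x \<in> l2 \<Longrightarrow> summable (block_mass x)"
  by (rule summableI_nonneg_bounded[where x="2 * (l2norm x)^2"]) (auto simp: block_mass_nonneg sum_block_mass_le)

lemma suminf_block_mass_le: "x \<in> l2 \<Longrightarrow> suminf (block_mass x) \<le> 2 * (l2norm x)^2"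
  by (rule suminf_le_const) (auto simp: sum_block_mass_le summable_block_mass)

lemma block_op_l2:
  assumes "bounded_entries t K" "x \<in> l2"
  shows "block_op t x \<in> l2" "l2norm (block_op t x) \<le> 2 * K * l2norm x"
proof -
  have K: "K \<ge> 0" "\<And>m k. cmod (t m k) \<le> K" using assms(1) unfolding bounded_entries_def by auto
  have pt: "(cmod (block_op t x m))^2 \<le> 2 * K^2 * block_mass x m" for m
    using norm_block_row_le[of t m K x] K assms(2) unfolding block_op_def by simp
  have sG: "summable (\<lambda>m. 2 * K^2 * block_mass x m)"
    using summable_block_mass[OF assms(2)] by (rule summable_mult)
  have s: "summable (\<lambda>m. (cmod (block_op t x m))^2)"
    by (rule summable_comparison_test'[OF sG, of 0]) (simp add: pt)
  then show l2: "block_op t x \<in> l2" unfolding l2_def by simp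
  have "(\<Sum>m. (cmod (block_op t x m))^2) \<le> (\<Sum>m. 2 * K^2 * block_mass x m)"
    by (rule suminf_le[OF pt s sG])
  also have "\<dots> = 2 * K^2 * suminf (block_mass x)"
    using summable_block_mass[OF assms(2)] by (rule suminf_mult)
  also have "\<dots> \<le> 2 * K^2 * (2 * (l2norm x)^2)"
    using suminf_block_mass_le[OF assms(2)] by (intro mult_left_mono) auto
  also have "\<dots> = (2 * K * l2norm x)^2" by (simp add: power_mult_distrib)
  finally show "l2norm (block_op t x) \<le> 2 * K * l2norm x"
    using l2 K(1) l2norm_nonneg[OF assms(2)] by (simp add: l2norm_le_iff_power2)
qed

lemma bop_block_op: assumes "bounded_entries t K" shows "bop (block_op t)"
  unfolding bop_def
proof (intro conjI ballI allI impI)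
  fix x y a b assume "x \<in> l2" "y \<in> l2"
  then show "block_op t (\<lambda>k. a * x k + b * y k) = (\<lambda>k. a * block_op t x k + b * block_op t y k)"
    using l2_lincomb by (simp add: block_op_def fun_eq_iff ring_distribs)
qed (use block_op_l2[OF assms] in \<open>auto simp: block_op_def\<close>)

lemma entry_block_op: "entry (block_op t) m k = (if k div 2 = m div 2 then t m k else 0)"
  unfolding entry_def block_op_def same_block_iff
  by (simp only: ebasis_l2 if_True) (auto simp: ebasis_def)

lemma block_op_in_A0:
  assumes "bounded_entries t K" "block_supp X t" shows "block_op t \<in> A0 X"
  unfolding A0_def
proof (safe)
  show "bop (block_op t)" using assms(1) by (rule bop_block_op)
next
  fix k m assume "block_op t (ebasis k) m \<noteq> 0"
  then have "t m k \<noteq> 0" "k div 2 = m div 2"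
    using entry_block_op[of t m k] by (auto simp: entry_def split: if_splits)
  with assms(2) have "m div 2 \<in> X" "k div 2 = m div 2" unfolding block_supp_def by blast+
  then show "\<exists>n\<in>X. k \<in> {2 * n, 2 * n + 1} \<and> m \<in> {2 * n, 2 * n + 1}"
    by (intro bexI[of _ "m div 2"]) auto
qed

lemma entry_block_op_supp: "block_supp X t \<Longrightarrow> entry (block_op t) = t"
  unfolding block_supp_iff by (auto simp: fun_eq_iff entry_block_op)

lemma A0_block_op_repr:
  assumes "T \<in> A0 X"
  obtains K where "T = block_op (entry T)" "bounded_entries (entry T) K" "block_supp X (entry T)"
  using A0_eq_block_op[OF assms] A0_entries[OF assms] by blast

definition madd :: "mat \<Rightarrow> mat \<Rightarrow> mat" where "madd s t = (\<lambda>m k. s m k + t m k)"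
definition mdiff :: "mat \<Rightarrow> mat \<Rightarrow> mat" where "mdiff s t = (\<lambda>m k. s m k - t m k)"
definition mscale :: "complex \<Rightarrow> mat \<Rightarrow> mat" where "mscale c t = (\<lambda>m k. c * t m k)"
definition madj :: "mat \<Rightarrow> mat" where "madj t = (\<lambda>m k. cnj (t k m))"
definition mmul :: "mat \<Rightarrow> mat \<Rightarrow> mat" where
  "mmul s t = (\<lambda>m k. s m (block_base m) * t (block_base m) k + s m (Suc (block_base m)) * t (Suc (block_base m)) k)"

lemma bounded_entries_madd: "bounded_entries s K1 \<Longrightarrow> bounded_entries t K2 \<Longrightarrow> bounded_entries (madd s t) (K1 + K2)"
  unfolding bounded_entries_def madd_def by (meson add_mono norm_triangle_le add_nonneg_nonneg)

lemma bounded_entries_mdiff: "bounded_entries s K1 \<Longrightarrow> bounded_entries t K2 \<Longrightarrow> bounded_entries (mdiff s t) (K1 + K2)"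
  unfolding bounded_entries_def mdiff_def by (meson add_mono norm_triangle_le_diff add_nonneg_nonneg)

lemma bounded_entries_mscale: "bounded_entries t K \<Longrightarrow> bounded_entries (mscale c t) (cmod c * K)"
  unfolding bounded_entries_def mscale_def by (auto simp: norm_mult intro: mult_left_mono)

lemma bounded_entries_madj: "bounded_entries t K \<Longrightarrow> bounded_entries (madj t) K"
  unfolding bounded_entries_def madj_def by auto

lemma bounded_entries_mmul:
  assumes "bounded_entries s K1" "bounded_entries t K2" shows "bounded_entries (mmul s t) (2 * (K1 * K2))"
proof -
  have prod: "cmod (s m j * t j' k) \<le> K1 * K2" for m j j' k
    using assms unfolding bounded_entries_def by (auto simp: norm_mult intro: mult_mono)
  have "cmod (mmul s t m k) \<le> K1 * K2 + K1 * K2" for m k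
    unfolding mmul_def by (rule order.trans[OF norm_triangle_ineq add_mono[OF prod prod]])
  then show ?thesis using assms unfolding bounded_entries_def by auto
qed

lemma block_supp_madd: "block_supp X s \<Longrightarrow> block_supp X t \<Longrightarrow> block_supp X (madd s t)"
  unfolding block_supp_iff madd_def by simp

lemma block_supp_mdiff: "block_supp X s \<Longrightarrow> block_supp X t \<Longrightarrow> block_supp X (mdiff s t)"
  unfolding block_supp_iff mdiff_def by simp

lemma block_supp_mscale: "block_supp X t \<Longrightarrow> block_supp X (mscale c t)"
  unfolding block_supp_iff mscale_def by simp

lemma block_supp_madj: "block_supp X t \<Longrightarrow> block_supp X (madj t)"
  unfolding block_supp_iff madj_def by (metis complex_cnj_zero)

lemma block_supp_mmul: "block_supp X s \<Longrightarrow> block_supp X t \<Longrightarrow> block_supp X (mmul s t)"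
  unfolding block_supp_iff mmul_def by (metis block_base_div mult_zero_left mult_zero_right add_0)

lemma block_op_add: "op_add (block_op s) (block_op t) = block_op (madd s t)"
  unfolding op_add_def block_op_def madd_def fun_eq_iff by (simp add: ring_distribs)

lemma block_op_diff: "op_diff (block_op s) (block_op t) = block_op (mdiff s t)"
  unfolding op_diff_def block_op_def mdiff_def fun_eq_iff by (simp add: left_diff_distrib)

lemma block_op_scale: "op_smult c (block_op t) = block_op (mscale c t)"
  unfolding op_smult_def block_op_def mscale_def fun_eq_iff by (simp add: ring_distribs)

lemma block_op_comp:
  assumes "bounded_entries t K" shows "block_op s \<circ> block_op t = block_op (mmul s t)"
proof
  fix x show "(block_op s \<circ> block_op t) x = block_op (mmul s t) x"
  proof (cases "x \<in> l2")
    case True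
    then have "block_op t x \<in> l2" using block_op_l2[OF assms] by blast
    with True show ?thesis
      by (simp add: block_op_def mmul_def fun_eq_iff ring_distribs)
  qed (simp add: block_op_def)
qed

lemma summable_l2_inner:
  assumes "u \<in> l2" "v \<in> l2" shows "summable (\<lambda>k. u k * cnj (v k))"
proof -
  have "norm (u k * cnj (v k)) \<le> (cmod (u k))^2 + (cmod (v k))^2" for k
  proof -
    have "cmod (u k) * cmod (v k) \<le> (cmod (u k))^2 + (cmod (v k))^2"
      using sum_squares_bound[of "cmod (u k)" "cmod (v k)"] mult_nonneg_nonneg[OF norm_ge_zero[of "u k"] norm_ge_zero[of "v k"]]
      by linarith
    then show ?thesis by (simp add: norm_mult)
  qed
  moreover have "summable (\<lambda>k. (cmod (u k))^2 + (cmod (v k))^2)"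
    using assms by (auto simp: l2_def intro: summable_add)
  ultimately show ?thesis by (rule summable_comparison_test'[where N=0, rotated])
qed

lemma l2inner_by_blocks:
  assumes "u \<in> l2" "v \<in> l2"
  shows "l2inner u v = (\<Sum>n. u (n*2) * cnj (v (n*2)) + u (Suc (n*2)) * cnj (v (Suc (n*2))))"
proof -
  have "(\<lambda>k. u k * cnj (v k)) sums l2inner u v"
    unfolding l2inner_def using summable_l2_inner[OF assms] by (rule summable_sums)
  from sums_group[OF this, of 2] show ?thesis
    by (simp add: sums_iff atLeastLessThanSuc add.commute)
qed

lemma is_adjoint_block_op:
  assumes "bounded_entries t K" shows "is_adjoint (block_op t) (block_op (madj t))"
  unfolding is_adjoint_def
proof (intro conjI ballI)
  show "bop (block_op (madj t))" using bop_block_op bounded_entries_madj[OF assms] by blast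
  fix x y assume x: "x \<in> l2" and y: "y \<in> l2"
  have tx: "block_op t x \<in> l2" and ty: "block_op (madj t) y \<in> l2"
    using block_op_l2(1) assms bounded_entries_madj[OF assms] x y by blast+
  show "l2inner (block_op t x) y = l2inner x (block_op (madj t) y)"
    unfolding l2inner_by_blocks[OF tx y] l2inner_by_blocks[OF x ty]
  proof (rule suminf_cong)
    fix n
    have "block_op t x (n*2) = t (n*2) (n*2) * x (n*2) + t (n*2) (Suc (n*2)) * x (Suc (n*2))"
      "block_op t x (Suc (n*2)) = t (Suc (n*2)) (n*2) * x (n*2) + t (Suc (n*2)) (Suc (n*2)) * x (Suc (n*2))"
      "block_op (madj t) y (n*2) = cnj (t (n*2) (n*2)) * y (n*2) + cnj (t (Suc (n*2)) (n*2)) * y (Suc (n*2))"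
      "block_op (madj t) y (Suc (n*2)) = cnj (t (n*2) (Suc (n*2))) * y (n*2) + cnj (t (Suc (n*2)) (Suc (n*2))) * y (Suc (n*2))"
      using x y unfolding block_op_def madj_def by simp_all
    note e = this
    show "block_op t x (n*2) * cnj (y (n*2)) + block_op t x (Suc (n*2)) * cnj (y (Suc (n*2))) =
         x (n*2) * cnj (block_op (madj t) y (n*2)) + x (Suc (n*2)) * cnj (block_op (madj t) y (Suc (n*2)))"
      unfolding e by (simp only: complex_cnj_add complex_cnj_mult complex_cnj_cnj) algebra
  qed
qed

section \<open>Compact block-diagonal operators\<close>

definition block_entries_vanish :: "mat \<Rightarrow> bool" where
  "block_entries_vanish t \<longleftrightarrow> (\<forall>e>0. \<exists>N. \<forall>m\<ge>N. \<forall>k. k div 2 = m div 2 \<longrightarrow> cmod (t m k) < e)"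

lemma l2_tendsto_imp_coord_tendsto:
  assumes "\<And>n. z n \<in> l2" "y \<in> l2" "(\<lambda>n. l2norm (\<lambda>k. z n k - y k)) \<longlonglongrightarrow> 0"
  shows "(\<lambda>n. z n m) \<longlonglongrightarrow> y m"
proof -
  have "(\<lambda>n. z n m - y m) \<longlonglongrightarrow> 0"
    using norm_coord_le_l2norm[OF l2_diff[OF assms(1,2)]]
    by (intro Lim_null_comparison[OF _ assms(3)]) simp
  then show ?thesis by (simp add: LIM_zero_iff)
qed

(* Otherwise some unit vectors e_k are mapped to vectors of norm at least e whose supports
   escape to infinity, so no subsequence of their images converges. *)
lemma compact_block_op_imp_vanish:
  assumes t: "bounded_entries t K" and compact: "compact_op (block_op t)"
  shows "block_entries_vanish t"
proof (rule ccontr)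
  assume "\<not> block_entries_vanish t"
  then obtain e where e: "e > 0" and "\<forall>N. \<exists>m\<ge>N. \<exists>k. k div 2 = m div 2 \<and> cmod (t m k) \<ge> e"
    unfolding block_entries_vanish_def by (auto simp: not_less)
  then obtain row col where rc: "\<And>N. row N \<ge> N" "\<And>N. col N div 2 = row N div 2"
    "\<And>N. cmod (t (row N) (col N)) \<ge> e"
    by metis
  define xs where "xs = (\<lambda>n. ebasis (col n))"
  have "(\<forall>n. xs n \<in> l2) \<and> (\<exists>B. \<forall>n. l2norm (xs n) \<le> B)" by (auto simp: xs_def)
  then obtain r y where r: "strict_mono r" and y: "y \<in> l2"
    and lim: "(\<lambda>n. l2norm (\<lambda>k. block_op t (xs (r n)) k - y k)) \<longlonglongrightarrow> 0"
    using compact unfolding compact_op_def by blast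
  define z where "z = (\<lambda>n. block_op t (xs (r n)))"
  have z: "z n \<in> l2" for n unfolding z_def xs_def using block_op_l2(1)[OF t] by simp
  have z_entry: "z n m = (if col (r n) div 2 = m div 2 then t m (col (r n)) else 0)" for n m
    using entry_block_op[of t m] unfolding z_def xs_def entry_def by simp
  have "y m = 0" for m
  proof -
    have "\<forall>n\<ge>Suc (Suc m). z n m = 0"
    proof (intro allI impI)
      fix n assume "n \<ge> Suc (Suc m)"
      with seq_suble[OF r, of n] rc(1)[of "r n"] have "row (r n) \<ge> Suc (Suc m)" by linarith
      then show "z n m = 0" using rc(2) z_entry by auto
    qed
    then have "(\<lambda>n. z n m) \<longlonglongrightarrow> 0"
      by (intro tendsto_eventually) (auto simp: eventually_sequentially)
    moreover have "(\<lambda>n. z n m) \<longlonglongrightarrow> y m"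
      using l2_tendsto_imp_coord_tendsto[OF z y] lim unfolding z_def by simp
    ultimately show ?thesis using LIMSEQ_unique by metis
  qed
  then have "(\<lambda>n. l2norm (z n)) \<longlonglongrightarrow> 0" using lim unfolding z_def by simp
  moreover have "e \<le> l2norm (z n)" for n
    using rc(2,3)[of "r n"] z_entry[of n "row (r n)"] norm_coord_le_l2norm[OF z, of n "row (r n)"] by simp
  ultimately have "e \<le> 0" by (intro LIMSEQ_le_const) auto
  then show False using e by simp
qed

lemma bounded_coordwise_convergent_subseq:
  fixes z :: "nat \<Rightarrow> nat \<Rightarrow> complex"
  assumes coord: "\<And>n m. cmod (z n m) \<le> C"
  obtains r where "strict_mono r" "\<And>m. convergent (\<lambda>j. z (r j) m)"
proof -
  interpret S: subseqs "\<lambda>m s. convergent (\<lambda>j. z (s j) m)"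
  proof
    fix m and s :: "nat \<Rightarrow> nat"
    have "bounded (range (\<lambda>j. z (s j) m))" by (rule boundedI[of _ C]) (use coord in auto)
    then obtain l r' where "strict_mono r'" "((\<lambda>j. z (s j) m) \<circ> r') \<longlonglongrightarrow> l"
      using bounded_imp_convergent_subsequence by blast
    then show "\<exists>r'::nat\<Rightarrow>nat. strict_mono r' \<and> convergent (\<lambda>j. z ((s \<circ> r') j) m)"
      by (auto simp: convergent_def o_def)
  qed
  have "convergent (\<lambda>j. z (S.diagseq j) m)" for m
  proof -
    have "convergent (\<lambda>j. z ((S.diagseq \<circ> (+) (Suc m)) j) m)"
    proof (rule S.diagseq_holds)
      fix r' s :: "nat \<Rightarrow> nat" and n assume "strict_mono r'" "convergent (\<lambda>j. z (s j) n)"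
      then show "convergent (\<lambda>j. z ((s \<circ> r') j) n)"
        using convergent_subseq_convergent[of "\<lambda>j. z (s j) n" r'] by (simp add: o_def)
    qed
    then show ?thesis
      using convergent_ignore_initial_segment[of "\<lambda>j. z (S.diagseq j) m" "Suc m"] by (simp add: add.commute)
  qed
  then show ?thesis using that S.subseq_diagseq by blast
qed

lemma l2_bounded_coordwise_convergent_subseq:
  fixes z :: "nat \<Rightarrow> vec"
  assumes z: "\<And>n. z n \<in> l2" and C: "\<And>n. l2norm (z n) \<le> C"
  obtains r y where "strict_mono r" "y \<in> l2" "\<And>m. (\<lambda>j. z (r j) m) \<longlonglongrightarrow> y m"
proof -
  have coord: "cmod (z n m) \<le> C" for n m using norm_coord_le_l2norm[OF z] C order.trans by blast
  obtain r where r: "strict_mono r" and conv: "\<And>m. convergent (\<lambda>j. z (r j) m)"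
    using bounded_coordwise_convergent_subseq[of z C, OF coord] by blast
  define y where "y m = lim (\<lambda>j. z (r j) m)" for m
  have lim: "(\<lambda>j. z (r j) m) \<longlonglongrightarrow> y m" for m
    unfolding y_def using conv by (simp add: convergent_LIMSEQ_iff)
  have "(\<Sum>m<L. (cmod (z (r j) m))^2) \<le> C^2" for L j
  proof -
    have "(\<Sum>m<L. (cmod (z (r j) m))^2) \<le> (l2norm (z (r j)))^2"
      unfolding l2norm_power2[OF z] using z by (intro sum_le_suminf) (auto simp: l2_def)
    also have "\<dots> \<le> C^2" using C l2norm_nonneg[OF z] by (intro power_mono) auto
    finally show ?thesis .
  qed
  then have "(\<Sum>m<L. (cmod (y m))^2) \<le> C^2" for L
  proof (intro LIMSEQ_le_const2)
    show "(\<lambda>j. \<Sum>m<L. (cmod (z (r j) m))^2) \<longlonglongrightarrow> (\<Sum>m<L. (cmod (y m))^2)"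
      by (intro tendsto_intros lim)
  qed blast
  then have "y \<in> l2"
    unfolding l2_def by (intro CollectI summableI_nonneg_bounded[where x="C^2"]) auto
  then show ?thesis using that r lim by blast
qed

lemma sum_norm_diff_power2_le:
  fixes u v :: "nat \<Rightarrow> 'a::real_normed_vector"
  shows "(\<Sum>m\<in>A. (norm (u m - v m))^2) \<le> 2 * (\<Sum>m\<in>A. (norm (u m))^2) + 2 * (\<Sum>m\<in>A. (norm (v m))^2)"
proof -
  have "(\<Sum>m\<in>A. (norm (u m - v m))^2) \<le> (\<Sum>m\<in>A. 2 * (norm (u m))^2 + 2 * (norm (v m))^2)"
    using power2_norm_add_le[of "u m" "- v m" for m] by (intro sum_mono) simp
  then show ?thesis by (simp add: sum.distrib sum_distrib_left)
qed

lemma sum_lessThan_le_split: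
  fixes f :: "nat \<Rightarrow> real"
  assumes "\<And>m. f m \<ge> 0"
  shows "(\<Sum>m<L. f m) \<le> (\<Sum>m<N. f m) + (\<Sum>m\<in>{N..<L}. f m)"
proof -
  have "(\<Sum>m<L. f m) \<le> (\<Sum>m\<in>{..<N} \<union> {N..<L}. f m)"
    by (rule sum_mono2) (auto simp: assms)
  also have "\<dots> = (\<Sum>m<N. f m) + (\<Sum>m\<in>{N..<L}. f m)"
    by (rule sum.union_disjoint) auto
  finally show ?thesis .
qed

lemma l2norm_less_if_partial_sums_le:
  assumes "x \<in> l2" "\<And>L. (\<Sum>m<L. (cmod (x m))^2) \<le> c" "c < e^2" "e > 0"
  shows "l2norm x < e"
proof -
  have "(l2norm x)^2 \<le> c"
    unfolding l2norm_power2[OF assms(1)] using assms(1,2) by (intro suminf_le_const) (auto simp: l2_def)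
  then have "(l2norm x)^2 < e^2" using assms(3) by linarith
  then show ?thesis by (rule power_less_imp_less_base) (use assms(4) in simp)
qed

lemma l2_tendsto_if_coord_tendsto_uniform_tails:
  assumes w: "\<And>j. w j \<in> l2" and y: "y \<in> l2" and lim: "\<And>m. (\<lambda>j. w j m) \<longlonglongrightarrow> y m"
    and tails: "\<And>e. e > 0 \<Longrightarrow> \<exists>N. \<forall>j L. (\<Sum>m\<in>{N..<L}. (cmod (w j m))^2) \<le> e"
  shows "(\<lambda>j. l2norm (\<lambda>k. w j k - y k)) \<longlonglongrightarrow> 0"
proof (rule LIMSEQ_I)
  fix e :: real assume e: "e > 0"
  obtain N where N: "\<And>j L. (\<Sum>m\<in>{N..<L}. (cmod (w j m))^2) \<le> e^2 / 16"
    using tails[of "e^2 / 16"] e by auto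
  have tail_y: "(\<Sum>m\<in>{N..<L}. (cmod (y m))^2) \<le> e^2 / 16" for L
  proof (rule LIMSEQ_le_const2)
    show "(\<lambda>j. \<Sum>m\<in>{N..<L}. (cmod (w j m))^2) \<longlonglongrightarrow> (\<Sum>m\<in>{N..<L}. (cmod (y m))^2)"
      by (intro tendsto_intros lim)
  qed (use N in blast)
  have "(\<lambda>j. \<Sum>m<N. (cmod (w j m - y m))^2) \<longlonglongrightarrow> (\<Sum>m<N. (cmod (y m - y m))^2)"
    by (intro tendsto_intros lim)
  then have "eventually (\<lambda>j. (\<Sum>m<N. (cmod (w j m - y m))^2) < e^2 / 2) sequentially"
    by (rule order_tendstoD(2)) (use e in simp)
  then obtain j0 where j0: "\<And>j. j \<ge> j0 \<Longrightarrow> (\<Sum>m<N. (cmod (w j m - y m))^2) < e^2 / 2"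
    unfolding eventually_sequentially by blast
  show "\<exists>no. \<forall>j\<ge>no. norm (l2norm (\<lambda>k. w j k - y k) - 0) < e"
  proof (intro exI allI impI)
    fix j assume "j \<ge> j0"
    have "(\<Sum>m<L. (cmod (w j m - y m))^2) \<le> e^2 / 2 + e^2 / 4" for L
      using sum_lessThan_le_split[of "\<lambda>m. (cmod (w j m - y m))^2" L N]
        sum_norm_diff_power2_le[of "w j" y "{N..<L}"] j0[OF \<open>j \<ge> j0\<close>] N[of j L] tail_y[of L]
      by simp
    then have "l2norm (\<lambda>k. w j k - y k) < e"
      by (rule l2norm_less_if_partial_sums_le[OF l2_diff[OF w y]]) (use e in simp_all)
    then show "norm (l2norm (\<lambda>k. w j k - y k) - 0) < e"
      using l2norm_nonneg[OF l2_diff[OF w y]] by simp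
  qed
qed

lemma block_op_tail_le:
  assumes "x \<in> l2" "d \<ge> 0" and small: "\<And>m k. m \<ge> N \<Longrightarrow> k div 2 = m div 2 \<Longrightarrow> cmod (t m k) \<le> d"
  shows "(\<Sum>m\<in>{N..<L}. (cmod (block_op t x m))^2) \<le> 4 * d^2 * (l2norm x)^2"
proof -
  have "(\<Sum>m\<in>{N..<L}. (cmod (block_op t x m))^2) \<le> (\<Sum>m\<in>{N..<L}. 2 * d^2 * block_mass x m)"
    using assms norm_block_row_le[of t _ d x] by (intro sum_mono) (simp add: block_op_def)
  also have "\<dots> = 2 * d^2 * (\<Sum>m\<in>{N..<L}. block_mass x m)" by (simp add: sum_distrib_left)
  also have "\<dots> \<le> 2 * d^2 * (2 * (l2norm x)^2)"
    using sum_block_mass_le[OF assms(1), of "{N..<L}"] by (intro mult_left_mono) auto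
  finally show ?thesis by simp
qed

lemma block_op_uniform_tails:
  assumes vanish: "block_entries_vanish t" and "e > 0"
  obtains N where "\<And>x L. x \<in> l2 \<Longrightarrow> l2norm x \<le> B \<Longrightarrow> (\<Sum>m\<in>{N..<L}. (cmod (block_op t x m))^2) \<le> e"
proof -
  define d where "d = sqrt (e / (4 * (B^2 + 1)))"
  have pos: "B^2 + 1 > 0" by (simp add: add_nonneg_pos)
  have d: "d > 0" "4 * d^2 * B^2 \<le> e"
  proof -
    show "d > 0" using \<open>e > 0\<close> pos by (simp add: d_def)
    have d2: "d^2 = e / (4 * (B^2 + 1))" using \<open>e > 0\<close> pos by (simp add: d_def)
    have "4 * d^2 * B^2 = e * (B^2 / (B^2 + 1))" unfolding d2 using pos by (simp add: field_simps)
    also have "\<dots> \<le> e * 1" using \<open>e > 0\<close> pos by (intro mult_left_mono) auto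
    finally show "4 * d^2 * B^2 \<le> e" by simp
  qed
  obtain N where "\<forall>m\<ge>N. \<forall>k. k div 2 = m div 2 \<longrightarrow> cmod (t m k) < d"
    using vanish d(1) unfolding block_entries_vanish_def by blast
  then have N: "\<And>m k. m \<ge> N \<Longrightarrow> k div 2 = m div 2 \<Longrightarrow> cmod (t m k) \<le> d"
    by (simp add: less_imp_le)
  have "(\<Sum>m\<in>{N..<L}. (cmod (block_op t x m))^2) \<le> e" if x: "x \<in> l2" "l2norm x \<le> B" for x L
  proof -
    have "(\<Sum>m\<in>{N..<L}. (cmod (block_op t x m))^2) \<le> 4 * d^2 * (l2norm x)^2"
      by (rule block_op_tail_le[OF x(1) less_imp_le[OF d(1)] N])
    also have "\<dots> \<le> 4 * d^2 * B^2"
      using x l2norm_nonneg[OF x(1)] by (intro mult_left_mono power_mono) auto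
    also have "\<dots> \<le> e" by (rule d(2))
    finally show ?thesis .
  qed
  then show ?thesis using that by blast
qed

lemma vanish_imp_compact_block_op:
  assumes t: "bounded_entries t K" and vanish: "block_entries_vanish t"
  shows "compact_op (block_op t)"
  unfolding compact_op_def
proof (intro conjI allI impI)
  show "bop (block_op t)" using bop_block_op[OF t] .
  fix xs :: "nat \<Rightarrow> vec"
  assume "(\<forall>n. xs n \<in> l2) \<and> (\<exists>B. \<forall>n. l2norm (xs n) \<le> B)"
  then obtain B where x: "\<And>n. xs n \<in> l2" and B: "\<And>n. l2norm (xs n) \<le> B" by blast
  have K: "K \<ge> 0" using t by (simp add: bounded_entries_def)
  have "l2norm (block_op t (xs n)) \<le> 2 * K * B" for n
    using block_op_l2(2)[OF t x[of n]] B[of n] K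
    by (meson mult_left_mono order.trans zero_le_mult_iff zero_le_numeral)
  then obtain r y where r: "strict_mono r" and y: "y \<in> l2"
    and lim: "\<And>m. (\<lambda>j. block_op t (xs (r j)) m) \<longlonglongrightarrow> y m"
    using l2_bounded_coordwise_convergent_subseq[where z="\<lambda>n. block_op t (xs n)"] block_op_l2(1)[OF t x]
    by blast
  have tails: "\<exists>N. \<forall>j L. (\<Sum>m\<in>{N..<L}. (cmod (block_op t (xs (r j)) m))^2) \<le> e" if "e > 0" for e
  proof -
    obtain N where "\<And>x L. x \<in> l2 \<Longrightarrow> l2norm x \<le> B \<Longrightarrow> (\<Sum>m\<in>{N..<L}. (cmod (block_op t x m))^2) \<le> e"
      using block_op_uniform_tails[OF vanish \<open>e > 0\<close>] by blast
    then show ?thesis using x B by blast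
  qed
  have "(\<lambda>j. l2norm (\<lambda>k. block_op t (xs (r j)) k - y k)) \<longlonglongrightarrow> 0"
    by (rule l2_tendsto_if_coord_tendsto_uniform_tails[where w="\<lambda>j. block_op t (xs (r j))",
          OF block_op_l2(1)[OF t x] y lim tails])
  then show "\<exists>r y. strict_mono r \<and> y \<in> l2 \<and> (\<lambda>n. l2norm (\<lambda>k. block_op t (xs (r n)) k - y k)) \<longlonglongrightarrow> 0"
    using r y by blast
qed

lemma tendsto_zero_diff:
  fixes f g :: "nat \<Rightarrow> complex"
  shows "f \<longlonglongrightarrow> 0 \<Longrightarrow> g \<longlonglongrightarrow> 0 \<Longrightarrow> (\<lambda>n. f n - g n) \<longlonglongrightarrow> 0"
  using tendsto_diff[of f 0 sequentially g 0] by simp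

lemma tendsto_zero_bounded_mult:
  fixes f g :: "nat \<Rightarrow> complex"
  assumes "\<And>n. cmod (g n) \<le> C" "f \<longlonglongrightarrow> 0"
  shows "(\<lambda>n. g n * f n) \<longlonglongrightarrow> 0" "(\<lambda>n. f n * g n) \<longlonglongrightarrow> 0"
proof -
  have "(\<lambda>n. C * cmod (f n)) \<longlonglongrightarrow> C * 0"
    using assms(2) by (intro tendsto_mult tendsto_const tendsto_norm_zero)
  then have lim: "(\<lambda>n. C * cmod (f n)) \<longlonglongrightarrow> 0" by simp
  have "norm (g n * f n) \<le> C * cmod (f n)" for n
    using assms(1)[of n] by (simp add: norm_mult mult_right_mono)
  then show "(\<lambda>n. g n * f n) \<longlonglongrightarrow> 0"
    by (intro Lim_null_comparison[OF _ lim]) simp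
  then show "(\<lambda>n. f n * g n) \<longlonglongrightarrow> 0" by (simp add: mult.commute)
qed

lemma tendsto_zero_if_uniform_approx:
  fixes f :: "nat \<Rightarrow> complex"
  assumes "\<And>e. e > 0 \<Longrightarrow> \<exists>g. g \<longlonglongrightarrow> 0 \<and> (\<forall>n. cmod (g n - f n) \<le> e)"
  shows "f \<longlonglongrightarrow> 0"
proof (rule LIMSEQ_I)
  fix e :: real assume "e > 0"
  then obtain g where g: "g \<longlonglongrightarrow> 0" and close: "\<And>n. cmod (g n - f n) \<le> e/2"
    using assms[of "e/2"] by auto
  obtain N where N: "\<And>n. n \<ge> N \<Longrightarrow> cmod (g n) < e/2"
    using LIMSEQ_D[OF g, of "e/2"] \<open>e > 0\<close> by auto
  have "cmod (f n) < e" if "n \<ge> N" for n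
    using norm_triangle_ineq4[of "g n" "g n - f n"] close[of n] N[OF that] by simp
  then show "\<exists>N. \<forall>n\<ge>N. norm (f n - 0) < e" by auto
qed

lemma norm_lincomb4_le:
  fixes p1 p2 p3 p4 t1 t2 t3 t4 :: complex
  assumes "cmod p1 \<le> 1" "cmod p2 \<le> 1" "cmod p3 \<le> 1" "cmod p4 \<le> 1"
    "cmod t1 \<le> K" "cmod t2 \<le> K" "cmod t3 \<le> K" "cmod t4 \<le> K"
  shows "cmod (p1*t1 + p2*t2 + p3*t3 + p4*t4) \<le> 4 * K"
proof -
  have term_le: "cmod (p * t) \<le> K" if "cmod p \<le> 1" "cmod t \<le> K" for p t :: complex
    using mult_mono[OF that] by (simp add: norm_mult)
  have "cmod (p1*t1 + p2*t2 + p3*t3 + p4*t4) \<le> cmod (p1*t1) + cmod (p2*t2) + cmod (p3*t3) + cmod (p4*t4)"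
    by (meson add_mono norm_triangle_le order_refl)
  also have "\<dots> \<le> 4 * K"
    using term_le[OF assms(1,5)] term_le[OF assms(2,6)] term_le[OF assms(3,7)] term_le[OF assms(4,8)]
    by linarith
  finally show ?thesis .
qed

section \<open>Block entries in the basis \<open>f\<close>\<close>

locale fbasis =
  fixes \<alpha> :: real
  assumes alpha_nonneg: "0 \<le> \<alpha>" and alpha_le_one: "\<alpha> \<le> 1"
begin

definition a :: complex where "a = complex_of_real \<alpha>"
definition b :: complex where "b = complex_of_real (sqrt (1 - \<alpha>^2))"

lemma a_sq_plus_b_sq: "a * a + b * b = 1"
proof -
  have "\<alpha>^2 \<le> 1" using alpha_nonneg alpha_le_one by (simp add: power_le_one)
  then have "\<alpha> * \<alpha> + sqrt (1 - \<alpha>^2) * sqrt (1 - \<alpha>^2) = 1" by (simp add: power2_eq_square[symmetric])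
  then have "complex_of_real (\<alpha> * \<alpha> + sqrt (1 - \<alpha>^2) * sqrt (1 - \<alpha>^2)) = 1" by simp
  then show ?thesis by (simp only: a_def b_def of_real_mult of_real_add)
qed

lemma cnj_a [simp]: "cnj a = a" and cnj_b [simp]: "cnj b = b"
  unfolding a_def b_def by simp_all

lemma norm_a_le_one: "cmod a \<le> 1" and norm_b_le_one: "cmod b \<le> 1"
  using alpha_nonneg alpha_le_one power_le_one[of \<alpha> 2] unfolding a_def b_def by auto

lemma norm_ab_products_le_one:
  "cmod (a*a) \<le> 1" "cmod (a*b) \<le> 1" "cmod (b*a) \<le> 1" "cmod (b*b) \<le> 1"
  "cmod (-(a*a)) \<le> 1" "cmod (-(a*b)) \<le> 1" "cmod (-(b*a)) \<le> 1" "cmod (-(b*b)) \<le> 1"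
  using norm_a_le_one norm_b_le_one by (simp_all add: norm_mult mult_le_one)

(* fent_ij t n is the (i, j) entry of the n-th block of t in the basis
   f_2n = a e_2n + b e_2n+1, f_2n+1 = b e_2n - a e_2n+1, i.e. f_(2n+i)^T t_n f_(2n+j);
   this change of basis is real orthogonal and its own inverse. *)

definition fent00 :: "mat \<Rightarrow> nat \<Rightarrow> complex" where
  "fent00 t n = a*a*t (2*n) (2*n) + a*b*t (2*n) (Suc (2*n)) + b*a*t (Suc (2*n)) (2*n) + b*b*t (Suc (2*n)) (Suc (2*n))"
definition fent01 :: "mat \<Rightarrow> nat \<Rightarrow> complex" where
  "fent01 t n = a*b*t (2*n) (2*n) - a*a*t (2*n) (Suc (2*n)) + b*b*t (Suc (2*n)) (2*n) - b*a*t (Suc (2*n)) (Suc (2*n))"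
definition fent10 :: "mat \<Rightarrow> nat \<Rightarrow> complex" where
  "fent10 t n = b*a*t (2*n) (2*n) + b*b*t (2*n) (Suc (2*n)) - a*a*t (Suc (2*n)) (2*n) - a*b*t (Suc (2*n)) (Suc (2*n))"
definition fent11 :: "mat \<Rightarrow> nat \<Rightarrow> complex" where
  "fent11 t n = b*b*t (2*n) (2*n) - b*a*t (2*n) (Suc (2*n)) - a*b*t (Suc (2*n)) (2*n) + a*a*t (Suc (2*n)) (Suc (2*n))"

lemmas fent_defs = fent00_def fent01_def fent10_def fent11_def

(* Signs moved into the coefficients, so that norm_lincomb4_le applies. *)
lemma fent_as_lincomb:
  "fent00 t n = (a*a)*t (2*n) (2*n) + (a*b)*t (2*n) (Suc (2*n)) + (b*a)*t (Suc (2*n)) (2*n) + (b*b)*t (Suc (2*n)) (Suc (2*n))"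
  "fent01 t n = (a*b)*t (2*n) (2*n) + (-(a*a))*t (2*n) (Suc (2*n)) + (b*b)*t (Suc (2*n)) (2*n) + (-(b*a))*t (Suc (2*n)) (Suc (2*n))"
  "fent10 t n = (b*a)*t (2*n) (2*n) + (b*b)*t (2*n) (Suc (2*n)) + (-(a*a))*t (Suc (2*n)) (2*n) + (-(a*b))*t (Suc (2*n)) (Suc (2*n))"
  "fent11 t n = (b*b)*t (2*n) (2*n) + (-(b*a))*t (2*n) (Suc (2*n)) + (-(a*b))*t (Suc (2*n)) (2*n) + (a*a)*t (Suc (2*n)) (Suc (2*n))"
  unfolding fent_defs by algebra+

lemma entry_as_fent_lincomb:
  "t (2*n) (2*n) = (a*a)*fent00 t n + (a*b)*fent01 t n + (b*a)*fent10 t n + (b*b)*fent11 t n"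
  "t (2*n) (Suc (2*n)) = (a*b)*fent00 t n + (-(a*a))*fent01 t n + (b*b)*fent10 t n + (-(b*a))*fent11 t n"
  "t (Suc (2*n)) (2*n) = (b*a)*fent00 t n + (b*b)*fent01 t n + (-(a*a))*fent10 t n + (-(a*b))*fent11 t n"
  "t (Suc (2*n)) (Suc (2*n)) = (b*b)*fent00 t n + (-(b*a))*fent01 t n + (-(a*b))*fent10 t n + (a*a)*fent11 t n"
  unfolding fent_defs using a_sq_plus_b_sq by algebra+

lemma norm_fent_le_block:
  assumes "cmod (t (2*n) (2*n)) \<le> K" "cmod (t (2*n) (Suc (2*n))) \<le> K"
    "cmod (t (Suc (2*n)) (2*n)) \<le> K" "cmod (t (Suc (2*n)) (Suc (2*n))) \<le> K"
  shows "cmod (fent00 t n) \<le> 4*K" "cmod (fent01 t n) \<le> 4*K" "cmod (fent10 t n) \<le> 4*K" "cmod (fent11 t n) \<le> 4*K"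
  unfolding fent_as_lincomb by (rule norm_lincomb4_le; (rule norm_ab_products_le_one | rule assms))+

lemma norm_fent_le:
  assumes "\<And>m k. cmod (t m k) \<le> K"
  shows "cmod (fent00 t n) \<le> 4*K" "cmod (fent01 t n) \<le> 4*K" "cmod (fent10 t n) \<le> 4*K" "cmod (fent11 t n) \<le> 4*K"
  by (rule norm_fent_le_block; rule assms)+

lemma norm_entry_le_fent:
  assumes "cmod (fent00 t n) \<le> K" "cmod (fent01 t n) \<le> K" "cmod (fent10 t n) \<le> K" "cmod (fent11 t n) \<le> K"
  shows "cmod (t (2*n) (2*n)) \<le> 4*K" "cmod (t (2*n) (Suc (2*n))) \<le> 4*K"
    "cmod (t (Suc (2*n)) (2*n)) \<le> 4*K" "cmod (t (Suc (2*n)) (Suc (2*n))) \<le> 4*K"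
  by (subst entry_as_fent_lincomb, rule norm_lincomb4_le; (rule norm_ab_products_le_one | rule assms))+

lemma fent_mmul:
  "fent00 (mmul s t) n = fent00 s n * fent00 t n + fent01 s n * fent10 t n"
  "fent01 (mmul s t) n = fent00 s n * fent01 t n + fent01 s n * fent11 t n"
  "fent10 (mmul s t) n = fent10 s n * fent00 t n + fent11 s n * fent10 t n"
  "fent11 (mmul s t) n = fent10 s n * fent01 t n + fent11 s n * fent11 t n"
  unfolding fent_defs mmul_def using a_sq_plus_b_sq by (simp_all only: block_base_simps) algebra+

lemma fent_madd:
  "fent00 (madd s t) = (\<lambda>n. fent00 s n + fent00 t n)" "fent01 (madd s t) = (\<lambda>n. fent01 s n + fent01 t n)"
  "fent10 (madd s t) = (\<lambda>n. fent10 s n + fent10 t n)" "fent11 (madd s t) = (\<lambda>n. fent11 s n + fent11 t n)"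
  unfolding fent_defs madd_def by (simp_all add: fun_eq_iff algebra_simps)

lemma fent_mdiff:
  "fent00 (mdiff s t) = (\<lambda>n. fent00 s n - fent00 t n)" "fent01 (mdiff s t) = (\<lambda>n. fent01 s n - fent01 t n)"
  "fent10 (mdiff s t) = (\<lambda>n. fent10 s n - fent10 t n)" "fent11 (mdiff s t) = (\<lambda>n. fent11 s n - fent11 t n)"
  unfolding fent_defs mdiff_def by (simp_all add: fun_eq_iff algebra_simps)

lemma fent_mscale:
  "fent01 (mscale c t) = (\<lambda>n. c * fent01 t n)" "fent10 (mscale c t) = (\<lambda>n. c * fent10 t n)"
  unfolding fent_defs mscale_def by (simp_all add: fun_eq_iff algebra_simps)

lemma fent_madj:
  "fent01 (madj t) = (\<lambda>n. cnj (fent10 t n))" "fent10 (madj t) = (\<lambda>n. cnj (fent01 t n))"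
  unfolding fent_defs madj_def by (simp_all add: fun_eq_iff algebra_simps)

lemma fent_outside_supp:
  assumes "block_supp X t" "n \<notin> X"
  shows "fent00 t n = 0" "fent01 t n = 0" "fent10 t n = 0" "fent11 t n = 0"
  using assms unfolding fent_defs block_supp_iff by simp_all

lemma vanish_imp_fent_tendsto_zero:
  assumes "block_entries_vanish t"
  shows "fent00 t \<longlonglongrightarrow> 0" "fent01 t \<longlonglongrightarrow> 0" "fent10 t \<longlonglongrightarrow> 0" "fent11 t \<longlonglongrightarrow> 0"
proof -
  have "\<exists>N. \<forall>n\<ge>N. cmod (fent00 t n) < e \<and> cmod (fent01 t n) < e \<and> cmod (fent10 t n) < e \<and> cmod (fent11 t n) < e"
    if e: "e > 0" for e
  proof -
    obtain N where N: "\<And>m k. m \<ge> N \<Longrightarrow> k div 2 = m div 2 \<Longrightarrow> cmod (t m k) < e/8"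
      using assms e unfolding block_entries_vanish_def by (meson divide_pos_pos zero_less_numeral)
    show ?thesis
    proof (intro exI allI impI)
      fix n assume "n \<ge> N"
      then have "cmod (t (2*n) (2*n)) \<le> e/8" "cmod (t (2*n) (Suc (2*n))) \<le> e/8"
        "cmod (t (Suc (2*n)) (2*n)) \<le> e/8" "cmod (t (Suc (2*n)) (Suc (2*n))) \<le> e/8"
        using N[of "2*n" "2*n"] N[of "2*n" "Suc (2*n)"] N[of "Suc (2*n)" "2*n"] N[of "Suc (2*n)" "Suc (2*n)"]
        by (simp_all add: less_imp_le)
      from norm_fent_le_block[OF this] e
      show "cmod (fent00 t n) < e \<and> cmod (fent01 t n) < e \<and> cmod (fent10 t n) < e \<and> cmod (fent11 t n) < e"
        by auto
    qed
  qed
  then show "fent00 t \<longlonglongrightarrow> 0" "fent01 t \<longlonglongrightarrow> 0" "fent10 t \<longlonglongrightarrow> 0" "fent11 t \<longlonglongrightarrow> 0"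
    by (intro LIMSEQ_I; simp; meson)+
qed

lemma fent_tendsto_zero_imp_vanish:
  assumes "fent00 t \<longlonglongrightarrow> 0" "fent01 t \<longlonglongrightarrow> 0" "fent10 t \<longlonglongrightarrow> 0" "fent11 t \<longlonglongrightarrow> 0"
  shows "block_entries_vanish t"
  unfolding block_entries_vanish_def
proof (intro allI impI)
  fix e :: real assume e: "e > 0"
  have small: "eventually (\<lambda>n. cmod (f n) \<le> e/8) sequentially" if "f \<longlonglongrightarrow> 0" for f :: "nat \<Rightarrow> complex"
    using order_tendstoD(2)[OF tendsto_norm_zero[OF that], of "e/8"] e by (auto elim: eventually_mono)
  have "eventually (\<lambda>n. cmod (fent00 t n) \<le> e/8 \<and> cmod (fent01 t n) \<le> e/8
      \<and> cmod (fent10 t n) \<le> e/8 \<and> cmod (fent11 t n) \<le> e/8) sequentially"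
    by (intro eventually_conj small assms)
  then obtain N where N: "\<And>n. n \<ge> N \<Longrightarrow> cmod (fent00 t n) \<le> e/8 \<and> cmod (fent01 t n) \<le> e/8
      \<and> cmod (fent10 t n) \<le> e/8 \<and> cmod (fent11 t n) \<le> e/8"
    unfolding eventually_sequentially by blast
  show "\<exists>N. \<forall>m\<ge>N. \<forall>k. k div 2 = m div 2 \<longrightarrow> cmod (t m k) < e"
  proof (intro exI allI impI)
    fix m k assume "m \<ge> 2 * N" and k: "k div 2 = m div 2"
    then have "m div 2 \<ge> N" by linarith
    then have "cmod (fent00 t (m div 2)) \<le> e/8" "cmod (fent01 t (m div 2)) \<le> e/8"
      "cmod (fent10 t (m div 2)) \<le> e/8" "cmod (fent11 t (m div 2)) \<le> e/8"
      using N by auto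
    from norm_entry_le_fent[OF this] same_block_cases[OF k]
    have "cmod (t m k) \<le> 4 * (e/8)" by auto
    then show "cmod (t m k) < e" using e by linarith
  qed
qed

lemma fvec_even: "fvec \<alpha> (2*n) = (\<lambda>m. a * ebasis (2*n) m + b * ebasis (Suc (2*n)) m)"
  unfolding fvec_def a_def b_def by (simp add: Let_def)

lemma fvec_odd: "fvec \<alpha> (Suc (2*n)) = (\<lambda>m. b * ebasis (2*n) m - a * ebasis (Suc (2*n)) m)"
  unfolding fvec_def a_def b_def by (simp add: Let_def)

lemma fvec_l2: "fvec \<alpha> j \<in> l2"
  by (rule l2_finite_support[of "Suc (Suc j)"]) (auto simp: fvec_def Let_def ebasis_def)

lemma fvec_apply:
  "fvec \<alpha> (2*n) (2*n) = a" "fvec \<alpha> (2*n) (Suc (2*n)) = b"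
  "fvec \<alpha> (Suc (2*n)) (2*n) = b" "fvec \<alpha> (Suc (2*n)) (Suc (2*n)) = -a"
  "m div 2 \<noteq> n \<Longrightarrow> fvec \<alpha> (2*n) m = 0" "m div 2 \<noteq> n \<Longrightarrow> fvec \<alpha> (Suc (2*n)) m = 0"
  unfolding fvec_even fvec_odd by (auto simp: ebasis_def)

lemma block_op_fvec_even:
  "block_op s (fvec \<alpha> (2*n)) m = (if m div 2 = n then s m (2*n) * a + s m (Suc (2*n)) * b else 0)"
proof -
  have "block_op s (fvec \<alpha> (2*n)) m = s m (block_base m) * fvec \<alpha> (2*n) (block_base m)
      + s m (Suc (block_base m)) * fvec \<alpha> (2*n) (Suc (block_base m))"
    using fvec_l2 by (simp add: block_op_def)
  then show ?thesis unfolding fvec_even by (auto simp: ebasis_def block_base_def)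
qed

lemma block_op_fvec_odd:
  "block_op s (fvec \<alpha> (Suc (2*n))) m = (if m div 2 = n then s m (2*n) * b - s m (Suc (2*n)) * a else 0)"
proof -
  have "block_op s (fvec \<alpha> (Suc (2*n))) m = s m (block_base m) * fvec \<alpha> (Suc (2*n)) (block_base m)
      + s m (Suc (block_base m)) * fvec \<alpha> (Suc (2*n)) (Suc (block_base m))"
    using fvec_l2 by (simp add: block_op_def)
  then show ?thesis unfolding fvec_odd by (auto simp: ebasis_def block_base_def)
qed

lemma Dset_fent_offdiag_zero:
  assumes "S \<in> Dset X \<alpha>"
  shows "fent01 (entry S) n = 0" "fent10 (entry S) n = 0"
proof -
  define s where "s = entry S"
  have "S \<in> A0 X" using assms by (simp add: Dset_def)
  then have S: "S = block_op s" and supp: "block_supp X s"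
    unfolding s_def by (auto elim: A0_block_op_repr)
  have "fent01 s n = 0 \<and> fent10 s n = 0"
  proof (cases "n \<in> X")
    case False then show ?thesis using fent_outside_supp[OF supp False] by simp
  next
    case True
    then obtain c c' where c: "S (fvec \<alpha> (2*n)) = (\<lambda>m. c * fvec \<alpha> (2*n) m)"
      and c': "S (fvec \<alpha> (Suc (2*n))) = (\<lambda>m. c' * fvec \<alpha> (Suc (2*n)) m)"
      using assms unfolding Dset_def by auto
    have e0: "s (2*n) (2*n) * a + s (2*n) (Suc (2*n)) * b = c * a"
      "s (Suc (2*n)) (2*n) * a + s (Suc (2*n)) (Suc (2*n)) * b = c * b"
      using fun_cong[OF c, of "2*n"] fun_cong[OF c, of "Suc (2*n)"]
      unfolding S block_op_fvec_even by (simp_all add: fvec_apply)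
    have e1: "s (2*n) (2*n) * b - s (2*n) (Suc (2*n)) * a = c' * b"
      "s (Suc (2*n)) (2*n) * b - s (Suc (2*n)) (Suc (2*n)) * a = c' * (-a)"
      using fun_cong[OF c', of "2*n"] fun_cong[OF c', of "Suc (2*n)"]
      unfolding S block_op_fvec_odd by (simp_all add: fvec_apply)
    have "fent10 s n = b * (s (2*n) (2*n) * a + s (2*n) (Suc (2*n)) * b)
        - a * (s (Suc (2*n)) (2*n) * a + s (Suc (2*n)) (Suc (2*n)) * b)"
      unfolding fent_defs by algebra
    also have "\<dots> = 0" unfolding e0 by algebra
    finally have "fent10 s n = 0" .
    moreover have "fent01 s n = a * (s (2*n) (2*n) * b - s (2*n) (Suc (2*n)) * a)
        + b * (s (Suc (2*n)) (2*n) * b - s (Suc (2*n)) (Suc (2*n)) * a)"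
      unfolding fent_defs by algebra
    then have "fent01 s n = 0" unfolding e1 by algebra
    ultimately show ?thesis by simp
  qed
  then show "fent01 (entry S) n = 0" "fent10 (entry S) n = 0" unfolding s_def by auto
qed

(* fcoef0 m and fcoef1 m are the m-th coordinates of f_2n and f_2n+1, where n = m div 2. *)

definition fcoef0 :: "nat \<Rightarrow> complex" where "fcoef0 m = (if even m then a else b)"
definition fcoef1 :: "nat \<Rightarrow> complex" where "fcoef1 m = (if even m then b else -a)"

lemma fcoef_simps [simp]:
  "fcoef0 (2*n) = a" "fcoef0 (Suc (2*n)) = b" "fcoef1 (2*n) = b" "fcoef1 (Suc (2*n)) = -a"
  by (simp_all add: fcoef0_def fcoef1_def)

lemma norm_fcoef_le_one: "cmod (fcoef0 m) \<le> 1" "cmod (fcoef1 m) \<le> 1"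
  using norm_a_le_one norm_b_le_one by (simp_all add: fcoef0_def fcoef1_def)

(* The block-diagonal matrix whose n-th block is diagonal in the basis f with entries
   fent00 t n and fent11 t n. *)
definition fdiag :: "mat \<Rightarrow> mat" where
  "fdiag t = (\<lambda>m k. if m div 2 = k div 2
     then fent00 t (m div 2) * fcoef0 m * fcoef0 k + fent11 t (m div 2) * fcoef1 m * fcoef1 k else 0)"

lemma fdiag_block:
  "fdiag t (2*n) (2*n) = fent00 t n * a * a + fent11 t n * b * b"
  "fdiag t (2*n) (Suc (2*n)) = fent00 t n * a * b - fent11 t n * b * a"
  "fdiag t (Suc (2*n)) (2*n) = fent00 t n * b * a - fent11 t n * a * b"
  "fdiag t (Suc (2*n)) (Suc (2*n)) = fent00 t n * b * b + fent11 t n * a * a"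
  by (simp_all add: fdiag_def)

lemma fent_fdiag:
  "fent00 (fdiag t) n = fent00 t n" "fent01 (fdiag t) n = 0"
  "fent10 (fdiag t) n = 0" "fent11 (fdiag t) n = fent11 t n"
  unfolding fent_defs fdiag_block using a_sq_plus_b_sq by algebra+

lemma bounded_entries_fdiag:
  assumes "bounded_entries t K" shows "bounded_entries (fdiag t) (8*K)"
proof -
  have K: "K \<ge> 0" "\<And>m k. cmod (t m k) \<le> K" using assms by (auto simp: bounded_entries_def)
  have term_le: "cmod (x * p * q) \<le> 4 * K" if "cmod x \<le> 4 * K" "cmod p \<le> 1" "cmod q \<le> 1" for x p q
  proof -
    have "cmod x * (cmod p * cmod q) \<le> 4 * K * (1 * 1)"
      using that K by (intro mult_mono) (auto intro: mult_mono)
    then show ?thesis by (simp add: norm_mult mult.assoc)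
  qed
  have "cmod (fdiag t m k) \<le> 8 * K" for m k
  proof -
    have "cmod (fent00 t (m div 2) * fcoef0 m * fcoef0 k + fent11 t (m div 2) * fcoef1 m * fcoef1 k) \<le> 4*K + 4*K"
      by (rule order.trans[OF norm_triangle_ineq add_mono[OF
            term_le[OF norm_fent_le(1)[OF K(2)] norm_fcoef_le_one(1) norm_fcoef_le_one(1)]
            term_le[OF norm_fent_le(4)[OF K(2)] norm_fcoef_le_one(2) norm_fcoef_le_one(2)]]])
    then show ?thesis unfolding fdiag_def using K(1) by auto
  qed
  then show ?thesis using K by (simp add: bounded_entries_def)
qed

lemma block_supp_fdiag:
  assumes "block_supp X t" shows "block_supp X (fdiag t)"
  unfolding block_supp_iff
proof (intro allI impI)
  fix m k assume "\<not> (m div 2 = k div 2 \<and> m div 2 \<in> X)"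
  then show "fdiag t m k = 0"
    using fent_outside_supp(1,4)[OF assms, of "m div 2"] by (auto simp: fdiag_def)
qed

lemma block_op_fdiag_fvec_even: "block_op (fdiag t) (fvec \<alpha> (2*n)) = (\<lambda>m. fent00 t n * fvec \<alpha> (2*n) m)"
proof
  fix m
  show "block_op (fdiag t) (fvec \<alpha> (2*n)) m = fent00 t n * fvec \<alpha> (2*n) m"
  proof (cases "m div 2 = n")
    case True
    then consider "m = 2*n" | "m = Suc (2*n)" using same_block_cases[of m m] by auto
    then show ?thesis
    proof cases
      case 1
      have "(fent00 t n * a * a + fent11 t n * b * b) * a + (fent00 t n * a * b - fent11 t n * b * a) * b
          = fent00 t n * a" using a_sq_plus_b_sq by algebra
      then show ?thesis unfolding 1 block_op_fvec_even by (simp add: fdiag_block fvec_apply)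
    next
      case 2
      have "(fent00 t n * b * a - fent11 t n * a * b) * a + (fent00 t n * b * b + fent11 t n * a * a) * b
          = fent00 t n * b" using a_sq_plus_b_sq by algebra
      then show ?thesis unfolding 2 block_op_fvec_even by (simp add: fdiag_block fvec_apply)
    qed
  qed (simp add: block_op_fvec_even fvec_apply)
qed

lemma block_op_fdiag_fvec_odd:
  "block_op (fdiag t) (fvec \<alpha> (Suc (2*n))) = (\<lambda>m. fent11 t n * fvec \<alpha> (Suc (2*n)) m)"
proof
  fix m
  show "block_op (fdiag t) (fvec \<alpha> (Suc (2*n))) m = fent11 t n * fvec \<alpha> (Suc (2*n)) m"
  proof (cases "m div 2 = n")
    case True
    then consider "m = 2*n" | "m = Suc (2*n)" using same_block_cases[of m m] by auto
    then show ?thesis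
    proof cases
      case 1
      have "(fent00 t n * a * a + fent11 t n * b * b) * b - (fent00 t n * a * b - fent11 t n * b * a) * a
          = fent11 t n * b" using a_sq_plus_b_sq by algebra
      then show ?thesis unfolding 1 block_op_fvec_odd by (simp add: fdiag_block fvec_apply)
    next
      case 2
      have "(fent00 t n * b * a - fent11 t n * a * b) * b - (fent00 t n * b * b + fent11 t n * a * a) * a
          = fent11 t n * (-a)" using a_sq_plus_b_sq by algebra
      then show ?thesis unfolding 2 block_op_fvec_odd by (simp add: fdiag_block fvec_apply)
    qed
  qed (simp add: block_op_fvec_odd fvec_apply)
qed

lemma block_op_fdiag_in_Dset:
  assumes "bounded_entries t K" "block_supp X t" shows "block_op (fdiag t) \<in> Dset X \<alpha>"
  unfolding Dset_def
  using block_op_in_A0[OF bounded_entries_fdiag[OF assms(1)] block_supp_fdiag[OF assms(2)]]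
    block_op_fdiag_fvec_even block_op_fdiag_fvec_odd[unfolded Suc_eq_plus1]
  by blast

section \<open>The algebra \<open>D\<^sub>K(X, \<alpha>)\<close>\<close>

definition fent_offdiag_vanish :: "mat \<Rightarrow> bool" where
  "fent_offdiag_vanish t \<longleftrightarrow> fent01 t \<longlonglongrightarrow> 0 \<and> fent10 t \<longlonglongrightarrow> 0"

lemma DK_imp_offdiag_vanish:
  assumes "T \<in> DK X \<alpha>" shows "T \<in> A0 X" "fent_offdiag_vanish (entry T)"
proof -
  obtain S R where T: "T = op_add S R" and S: "S \<in> Dset X \<alpha>" and R: "R \<in> A0 X" "compact_op R"
    using assms unfolding DK_def by blast
  have "S \<in> A0 X" using S by (simp add: Dset_def)
  then obtain Ks where S': "S = block_op (entry S)" "bounded_entries (entry S) Ks" "block_supp X (entry S)"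
    by (rule A0_block_op_repr)
  obtain Kr where R': "R = block_op (entry R)" "bounded_entries (entry R) Kr" "block_supp X (entry R)"
    using A0_block_op_repr[OF R(1)] by blast
  have T': "T = block_op (madd (entry S) (entry R))"
    unfolding T by (subst S'(1), subst R'(1), rule block_op_add)
  have supp: "block_supp X (madd (entry S) (entry R))" by (rule block_supp_madd[OF S'(3) R'(3)])
  show "T \<in> A0 X"
    unfolding T' by (rule block_op_in_A0[OF bounded_entries_madd[OF S'(2) R'(2)] supp])
  have "block_entries_vanish (entry R)"
    using R(2) R'(1) compact_block_op_imp_vanish[OF R'(2)] by simp
  then show "fent_offdiag_vanish (entry T)"
    unfolding T' entry_block_op_supp[OF supp] fent_offdiag_vanish_def fent_madd Dset_fent_offdiag_zero[OF S]
    using vanish_imp_fent_tendsto_zero by simp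
qed

lemma offdiag_vanish_imp_DK:
  assumes "T \<in> A0 X" "fent_offdiag_vanish (entry T)" shows "T \<in> DK X \<alpha>"
proof -
  define t where "t = entry T"
  obtain K where T: "T = block_op t" and t: "bounded_entries t K" and supp: "block_supp X t"
    unfolding t_def using A0_block_op_repr[OF assms(1)] by blast
  define r where "r = mdiff t (fdiag t)"
  have r: "bounded_entries r (K + 8*K)" "block_supp X r"
    unfolding r_def using bounded_entries_mdiff[OF t bounded_entries_fdiag[OF t]]
      block_supp_mdiff[OF supp block_supp_fdiag[OF supp]] by auto
  have "fent00 r = (\<lambda>n. 0)" "fent01 r = fent01 t" "fent10 r = fent10 t" "fent11 r = (\<lambda>n. 0)"
    by (simp_all add: fun_eq_iff r_def fent_mdiff fent_fdiag)
  then have "block_entries_vanish r"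
    using assms(2) unfolding t_def[symmetric] fent_offdiag_vanish_def
    by (intro fent_tendsto_zero_imp_vanish) simp_all
  then have "compact_op (block_op r)" by (rule vanish_imp_compact_block_op[OF r(1)])
  moreover have "T = op_add (block_op (fdiag t)) (block_op r)"
    unfolding T block_op_add r_def by (rule arg_cong[where f=block_op]) (simp add: madd_def mdiff_def fun_eq_iff)
  ultimately show ?thesis
    unfolding DK_def using block_op_fdiag_in_Dset[OF t supp] block_op_in_A0[OF r] by blast
qed

lemma DK_iff: "T \<in> DK X \<alpha> \<longleftrightarrow> T \<in> A0 X \<and> fent_offdiag_vanish (entry T)"
  using DK_imp_offdiag_vanish offdiag_vanish_imp_DK by blast

lemma block_op_in_DK:
  "bounded_entries t K \<Longrightarrow> block_supp X t \<Longrightarrow> fent_offdiag_vanish t \<Longrightarrow> block_op t \<in> DK X \<alpha>"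
  unfolding DK_iff using block_op_in_A0 entry_block_op_supp by metis

lemma DK_block_op_repr:
  assumes "T \<in> DK X \<alpha>"
  obtains K where "T = block_op (entry T)" "bounded_entries (entry T) K" "block_supp X (entry T)"
    "fent_offdiag_vanish (entry T)"
  using assms unfolding DK_iff using A0_block_op_repr by metis

lemma zero_in_DK: "(\<lambda>x k. 0) \<in> DK X \<alpha>"
proof -
  have "(\<lambda>x k. 0) = block_op (\<lambda>m k. 0)" by (auto simp: block_op_def fun_eq_iff)
  moreover have "fent01 (\<lambda>m k. 0) = (\<lambda>n. 0)" "fent10 (\<lambda>m k. 0) = (\<lambda>n. 0)"
    by (simp_all add: fun_eq_iff fent_defs)
  then have "fent_offdiag_vanish (\<lambda>m k. 0)" by (simp add: fent_offdiag_vanish_def)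
  ultimately show ?thesis
    by (metis block_op_in_DK bounded_entries_def block_supp_def norm_zero order_refl)
qed

lemma DK_add:
  assumes "S \<in> DK X \<alpha>" "T \<in> DK X \<alpha>" shows "op_add S T \<in> DK X \<alpha>"
proof -
  obtain Ks where S: "S = block_op (entry S)" "bounded_entries (entry S) Ks" "block_supp X (entry S)"
    "fent_offdiag_vanish (entry S)" by (rule DK_block_op_repr[OF assms(1)])
  obtain Kt where T: "T = block_op (entry T)" "bounded_entries (entry T) Kt" "block_supp X (entry T)"
    "fent_offdiag_vanish (entry T)" by (rule DK_block_op_repr[OF assms(2)])
  have "fent_offdiag_vanish (madd (entry S) (entry T))"
    using S(4) T(4) unfolding fent_offdiag_vanish_def fent_madd by (simp add: tendsto_add_zero)
  then have "block_op (madd (entry S) (entry T)) \<in> DK X \<alpha>"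
    by (rule block_op_in_DK[OF bounded_entries_madd[OF S(2) T(2)] block_supp_madd[OF S(3) T(3)]])
  then show ?thesis by (metis S(1) T(1) block_op_add)
qed

lemma DK_scale:
  assumes "T \<in> DK X \<alpha>" shows "op_smult c T \<in> DK X \<alpha>"
proof -
  obtain K where T: "T = block_op (entry T)" "bounded_entries (entry T) K" "block_supp X (entry T)"
    "fent_offdiag_vanish (entry T)" by (rule DK_block_op_repr[OF assms])
  have "fent_offdiag_vanish (mscale c (entry T))"
    using T(4) unfolding fent_offdiag_vanish_def fent_mscale by (simp add: tendsto_mult_right_zero)
  then have "block_op (mscale c (entry T)) \<in> DK X \<alpha>"
    by (rule block_op_in_DK[OF bounded_entries_mscale[OF T(2)] block_supp_mscale[OF T(3)]])
  then show ?thesis by (metis T(1) block_op_scale)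
qed

lemma offdiag_vanish_mmul:
  assumes "bounded_entries s Ks" "bounded_entries t Kt" "fent_offdiag_vanish s" "fent_offdiag_vanish t"
  shows "fent_offdiag_vanish (mmul s t)"
proof -
  note bs = norm_fent_le[of s Ks] and bt = norm_fent_le[of t Kt]
  have Ks: "\<And>m k. cmod (s m k) \<le> Ks" and Kt: "\<And>m k. cmod (t m k) \<le> Kt"
    using assms(1,2) by (auto simp: bounded_entries_def)
  have s0: "fent01 s \<longlonglongrightarrow> 0" "fent10 s \<longlonglongrightarrow> 0" and t0: "fent01 t \<longlonglongrightarrow> 0" "fent10 t \<longlonglongrightarrow> 0"
    using assms(3,4) unfolding fent_offdiag_vanish_def by auto
  have "(\<lambda>n. fent00 s n * fent01 t n + fent01 s n * fent11 t n) \<longlonglongrightarrow> 0"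
    by (intro tendsto_add_zero tendsto_zero_bounded_mult(1)[OF bs(1)[OF Ks] t0(1)]
        tendsto_zero_bounded_mult(2)[OF bt(4)[OF Kt] s0(1)])
  moreover have "(\<lambda>n. fent10 s n * fent00 t n + fent11 s n * fent10 t n) \<longlonglongrightarrow> 0"
    by (intro tendsto_add_zero tendsto_zero_bounded_mult(2)[OF bt(1)[OF Kt] s0(2)]
        tendsto_zero_bounded_mult(1)[OF bs(4)[OF Ks] t0(2)])
  ultimately show ?thesis unfolding fent_offdiag_vanish_def fent_mmul by simp
qed

lemma DK_comp:
  assumes "S \<in> DK X \<alpha>" "T \<in> DK X \<alpha>" shows "S \<circ> T \<in> DK X \<alpha>"
proof -
  obtain Ks where S: "S = block_op (entry S)" "bounded_entries (entry S) Ks" "block_supp X (entry S)"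
    "fent_offdiag_vanish (entry S)" by (rule DK_block_op_repr[OF assms(1)])
  obtain Kt where T: "T = block_op (entry T)" "bounded_entries (entry T) Kt" "block_supp X (entry T)"
    "fent_offdiag_vanish (entry T)" by (rule DK_block_op_repr[OF assms(2)])
  have "block_op (mmul (entry S) (entry T)) \<in> DK X \<alpha>"
    by (rule block_op_in_DK[OF bounded_entries_mmul[OF S(2) T(2)] block_supp_mmul[OF S(3) T(3)]
          offdiag_vanish_mmul[OF S(2) T(2) S(4) T(4)]])
  then show ?thesis by (metis S(1) T(1) block_op_comp[OF T(2)])
qed

lemma DK_has_adjoint:
  assumes "T \<in> DK X \<alpha>" shows "\<exists>S\<in>DK X \<alpha>. is_adjoint T S"
proof -
  obtain K where T: "T = block_op (entry T)" "bounded_entries (entry T) K" "block_supp X (entry T)"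
    "fent_offdiag_vanish (entry T)" by (rule DK_block_op_repr[OF assms])
  have "fent_offdiag_vanish (madj (entry T))"
    using T(4) unfolding fent_offdiag_vanish_def fent_madj by (simp add: tendsto_cnj[where a=0, simplified])
  then have "block_op (madj (entry T)) \<in> DK X \<alpha>"
    by (rule block_op_in_DK[OF bounded_entries_madj[OF T(2)] block_supp_madj[OF T(3)]])
  moreover have "is_adjoint T (block_op (madj (entry T)))"
    by (subst T(1), rule is_adjoint_block_op[OF T(2)])
  ultimately show ?thesis by blast
qed

lemma offdiag_vanish_closed:
  assumes "\<And>e. e > 0 \<Longrightarrow> \<exists>s. fent_offdiag_vanish s \<and> (\<forall>m k. cmod (s m k - t m k) \<le> e)"
  shows "fent_offdiag_vanish t"
proof -
  have approx: "\<exists>g. g \<longlonglongrightarrow> 0 \<and> (\<forall>n. cmod (g n - F t n) \<le> e)"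
    if F: "F = fent01 \<or> F = fent10" and "e > 0" for F e
  proof -
    obtain s where s: "fent_offdiag_vanish s" and close: "\<And>m k. cmod (mdiff s t m k) \<le> e/4"
      using assms[of "e/4"] \<open>e > 0\<close> unfolding mdiff_def by auto
    have "F s \<longlonglongrightarrow> 0" using s F unfolding fent_offdiag_vanish_def by auto
    moreover have "cmod (F s n - F t n) \<le> e" for n
      using F norm_fent_le(2,3)[where t="mdiff s t" and K="e/4" and n=n, OF close] by (auto simp: fent_mdiff)
    ultimately show ?thesis by blast
  qed
  show ?thesis
    unfolding fent_offdiag_vanish_def
    using tendsto_zero_if_uniform_approx[OF approx] by blast
qed

lemma DK_closed:
  assumes Ts: "\<And>n. Ts n \<in> DK X \<alpha>" and T: "bop T" and lim: "(\<lambda>n. opnorm (op_diff (Ts n) T)) \<longlonglongrightarrow> 0"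
  shows "T \<in> DK X \<alpha>"
proof -
  have A0: "Ts n \<in> A0 X" for n using Ts unfolding DK_iff by blast
  have "fent_offdiag_vanish (entry T)"
  proof (rule offdiag_vanish_closed)
    fix e :: real assume "e > 0"
    then obtain n where "norm (opnorm (op_diff (Ts n) T) - 0) < e"
      using LIMSEQ_D[OF lim] by blast
    then have small: "opnorm (op_diff (Ts n) T) \<le> e" by simp
    have "cmod (entry (Ts n) m k - entry T m k) \<le> e" for m k
      using norm_entry_diff_le_opnorm[of "Ts n" T m k] A0 T small by (auto simp: A0_def)
    then show "\<exists>s. fent_offdiag_vanish s \<and> (\<forall>m k. cmod (s m k - entry T m k) \<le> e)"
      using Ts[of n] unfolding DK_iff by blast
  qed
  then show ?thesis unfolding DK_iff using A0_closed[OF A0 T lim] by blast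
qed

theorem cstar_subalg_DK: "cstar_subalg (DK X \<alpha>)"
  unfolding cstar_subalg_def
proof (intro conjI ballI allI impI)
  show "DK X \<alpha> \<subseteq> Collect bop" using DK_imp_offdiag_vanish(1) by (auto simp: A0_def)
next
  fix Ts T assume "(\<forall>n. Ts n \<in> DK X \<alpha>) \<and> bop T \<and> (\<lambda>n. opnorm (op_diff (Ts n) T)) \<longlonglongrightarrow> 0"
  then show "T \<in> DK X \<alpha>" using DK_closed by blast
qed (simp_all add: zero_in_DK DK_add DK_scale DK_comp DK_has_adjoint)

lemma commutator_vanish:
  assumes s: "bounded_entries s Ks" "fent_offdiag_vanish s"
    and t: "bounded_entries t Kt" "fent_offdiag_vanish t"
  shows "block_entries_vanish (mdiff (mmul s t) (mmul t s))"
proof -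
  have Ks: "\<And>m k. cmod (s m k) \<le> Ks" and Kt: "\<And>m k. cmod (t m k) \<le> Kt"
    using s(1) t(1) by (auto simp: bounded_entries_def)
  note bs = norm_fent_le[OF Ks] and bt = norm_fent_le[OF Kt]
  have s0: "fent01 s \<longlonglongrightarrow> 0" "fent10 s \<longlonglongrightarrow> 0" and t0: "fent01 t \<longlonglongrightarrow> 0" "fent10 t \<longlonglongrightarrow> 0"
    using s(2) t(2) unfolding fent_offdiag_vanish_def by auto
  have "(\<lambda>n. (fent00 s n * fent00 t n + fent01 s n * fent10 t n) - (fent00 t n * fent00 s n + fent01 t n * fent10 s n))
      \<longlonglongrightarrow> 0"
    by (simp add: algebra_simps, intro tendsto_zero_diff tendsto_zero_bounded_mult(2)[OF bt(3) s0(1)]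
        tendsto_zero_bounded_mult(2)[OF bs(3) t0(1)])
  moreover have "(\<lambda>n. (fent00 s n * fent01 t n + fent01 s n * fent11 t n) - (fent00 t n * fent01 s n + fent01 t n * fent11 s n))
      \<longlonglongrightarrow> 0"
    by (intro tendsto_zero_diff tendsto_add_zero tendsto_zero_bounded_mult(1)[OF bs(1) t0(1)]
        tendsto_zero_bounded_mult(2)[OF bt(4) s0(1)] tendsto_zero_bounded_mult(1)[OF bt(1) s0(1)]
        tendsto_zero_bounded_mult(2)[OF bs(4) t0(1)])
  moreover have "(\<lambda>n. (fent10 s n * fent00 t n + fent11 s n * fent10 t n) - (fent10 t n * fent00 s n + fent11 t n * fent10 s n))
      \<longlonglongrightarrow> 0"
    by (intro tendsto_zero_diff tendsto_add_zero tendsto_zero_bounded_mult(2)[OF bt(1) s0(2)]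
        tendsto_zero_bounded_mult(1)[OF bs(4) t0(2)] tendsto_zero_bounded_mult(2)[OF bs(1) t0(2)]
        tendsto_zero_bounded_mult(1)[OF bt(4) s0(2)])
  moreover have "(\<lambda>n. (fent10 s n * fent01 t n + fent11 s n * fent11 t n) - (fent10 t n * fent01 s n + fent11 t n * fent11 s n))
      \<longlonglongrightarrow> 0"
    by (simp add: algebra_simps, intro tendsto_zero_diff tendsto_zero_bounded_mult(2)[OF bt(3) s0(1)]
        tendsto_zero_bounded_mult(2)[OF bs(3) t0(1)])
  ultimately show ?thesis
    by (intro fent_tendsto_zero_imp_vanish) (simp_all only: fent_mdiff fent_mmul)
qed

theorem almost_commutative_DK: "almost_commutative (DK X \<alpha>)"
  unfolding almost_commutative_def almost_commute_def
proof (intro ballI)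
  fix S T assume "S \<in> DK X \<alpha>" "T \<in> DK X \<alpha>"
  then obtain Ks Kt where
    S: "S = block_op (entry S)" "bounded_entries (entry S) Ks" "fent_offdiag_vanish (entry S)" and
    T: "T = block_op (entry T)" "bounded_entries (entry T) Kt" "fent_offdiag_vanish (entry T)"
    by (metis DK_block_op_repr)
  have "op_diff (S \<circ> T) (T \<circ> S) = block_op (mdiff (mmul (entry S) (entry T)) (mmul (entry T) (entry S)))"
    using S(1) T(1) block_op_comp[OF S(2)] block_op_comp[OF T(2)] block_op_diff by metis
  moreover have "compact_op (block_op (mdiff (mmul (entry S) (entry T)) (mmul (entry T) (entry S))))"
    by (rule vanish_imp_compact_block_op[OF
          bounded_entries_mdiff[OF bounded_entries_mmul[OF S(2) T(2)] bounded_entries_mmul[OF T(2) S(2)]]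
          commutator_vanish[OF S(2,3) T(2,3)]])
  ultimately show "compact_op (op_diff (S \<circ> T) (T \<circ> S))" by simp
qed

(* The orthogonal projection onto the closed span of {f_2n | n in X}. *)

definition fproj :: "nat set \<Rightarrow> mat" where
  "fproj X = (\<lambda>m k. if m div 2 = k div 2 \<and> m div 2 \<in> X then fcoef0 m * fcoef0 k else 0)"

lemma bounded_entries_fproj: "bounded_entries (fproj X) 1"
  using norm_fcoef_le_one(1) by (auto simp: bounded_entries_def fproj_def norm_mult intro: mult_le_one)

lemma block_supp_fproj: "block_supp X (fproj X)"
  unfolding block_supp_iff fproj_def by auto

lemma fent_fproj:
  "fent00 (fproj X) n = (if n \<in> X then 1 else 0)" "fent01 (fproj X) n = 0"
  "fent10 (fproj X) n = 0" "fent11 (fproj X) n = 0"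
proof -
  consider "n \<in> X" | "n \<notin> X" by blast
  then have "fent00 (fproj X) n = (if n \<in> X then 1 else 0) \<and> fent01 (fproj X) n = 0
      \<and> fent10 (fproj X) n = 0 \<and> fent11 (fproj X) n = 0"
  proof cases
    case 1
    then show ?thesis unfolding fent_defs fproj_def using a_sq_plus_b_sq by simp algebra
  next
    case 2
    then show ?thesis using fent_outside_supp[OF block_supp_fproj] by simp
  qed
  then show "fent00 (fproj X) n = (if n \<in> X then 1 else 0)" "fent01 (fproj X) n = 0"
    "fent10 (fproj X) n = 0" "fent11 (fproj X) n = 0" by auto
qed

lemma fproj_in_DK: "block_op (fproj X) \<in> DK X \<alpha>"
proof (rule block_op_in_DK[OF bounded_entries_fproj block_supp_fproj])
  have "fent01 (fproj X) = (\<lambda>n. 0)" "fent10 (fproj X) = (\<lambda>n. 0)"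
    by (simp_all add: fun_eq_iff fent_fproj)
  then show "fent_offdiag_vanish (fproj X)" by (simp add: fent_offdiag_vanish_def)
qed

lemma fent_commutator_fproj:
  assumes "block_supp X t"
  shows "fent01 (mdiff (mmul t (fproj X)) (mmul (fproj X) t)) = (\<lambda>n. - fent01 t n)"
    "fent10 (mdiff (mmul t (fproj X)) (mmul (fproj X) t)) = fent10 t"
  using fent_outside_supp[OF assms]
  by (auto simp: fun_eq_iff fent_mdiff fent_mmul fent_fproj)

lemma almost_commute_fproj_imp_DK:
  assumes "T \<in> A0 X" "almost_commute T (block_op (fproj X))"
  shows "T \<in> DK X \<alpha>"
proof -
  define t where "t = entry T"
  obtain K where T: "T = block_op t" and t: "bounded_entries t K" and supp: "block_supp X t"
    unfolding t_def using A0_block_op_repr[OF assms(1)] by blast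
  define c where "c = mdiff (mmul t (fproj X)) (mmul (fproj X) t)"
  have "op_diff (T \<circ> block_op (fproj X)) (block_op (fproj X) \<circ> T) = block_op c"
    unfolding c_def T block_op_comp[OF bounded_entries_fproj] block_op_comp[OF t] by (rule block_op_diff)
  then have "compact_op (block_op c)" using assms(2) by (simp add: almost_commute_def)
  moreover have "bounded_entries c (2 * (K * 1) + 2 * (1 * K))"
    unfolding c_def by (intro bounded_entries_mdiff bounded_entries_mmul t bounded_entries_fproj)
  ultimately have "block_entries_vanish c" by (intro compact_block_op_imp_vanish)
  then have "fent01 c \<longlonglongrightarrow> 0" "fent10 c \<longlonglongrightarrow> 0" by (auto dest: vanish_imp_fent_tendsto_zero)
  then have "fent_offdiag_vanish t"
    unfolding fent_offdiag_vanish_def c_def fent_commutator_fproj[OF supp]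
    using tendsto_minus_cancel[of "fent01 t" 0] by simp
  then show ?thesis unfolding DK_iff t_def using assms(1) by simp
qed

theorem almost_masa_DK: "almost_masa (A0 X) (DK X \<alpha>)"
  unfolding almost_masa_def
proof (intro conjI allI impI)
  show "DK X \<alpha> \<subseteq> A0 X" using DK_imp_offdiag_vanish(1) by blast
  fix B assume B: "cstar_subalg B \<and> almost_commutative B \<and> DK X \<alpha> \<subseteq> B \<and> B \<subseteq> A0 X"
  show "B = DK X \<alpha>"
  proof
    show "B \<subseteq> DK X \<alpha>"
    proof
      fix T assume "T \<in> B"
      moreover have "block_op (fproj X) \<in> B" using fproj_in_DK B by blast
      ultimately show "T \<in> DK X \<alpha>"
        using B almost_commute_fproj_imp_DK unfolding almost_commutative_def by blast
    qed
  qed (use B in blast)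
qed (rule cstar_subalg_DK, rule almost_commutative_DK)

end

theorem lemma4p8:
  fixes X :: "nat set" and \<alpha> :: real
  assumes "71/72 < \<alpha>" and "\<alpha> \<le> 1"
  shows "almost_masa (A0 X) (DK X \<alpha>)"
proof -
  interpret fbasis \<alpha> using assms by unfold_locales auto
  show ?thesis by (rule almost_masa_DK)
qed

end
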